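(* Let $n$ be a positive integer and $\mathbf a\in\mathbb N^n$. Then $$\sum_{m\ge0}v^{(n,m)}(\mathbf a)x^m=\frac{\sum_{\mathbf j\in\{0,1\}^n}(-1)^{\mathrm{ind}(\chi(\mathbf a))+\mathrm{ind}(\mathbf j)}Q_{\mathbf a,\mathbf j}(x)}{(1-x)^{2^n}},$$ where $Q_{\mathbf a,\mathbf j}(x)$ is the determinant of the matrix obtained from $I-xA_n$ by deleting the row indexed by $\mathbf j$ and the column indexed by $\chi(\mathbf a)$. In particular, $v^{(n,m)}(\mathbf a)$ is a polynomial in $m$ of degree at most $2^n-1$.
   Context: $G(n,m)$ is the directed graph with vertex set $\{(i,j):1\le i\le n,\ 0\le j\le m\}\cup\{s\}$ and edges $((i,j),(i,j+1))$ for $1\le i\le n$, $0\le j\le m-1$; $((i,j),(i+1,j))$ for $1\le i\le n-1$, $0\le j\le m$; $((n,j),s)$ for $0\le j\le m$. $\mathcal F_{G(n,m)}(\mathbf a)$ is the polytope of nonnegative real edge weightings with outflow minus inflow equal to $a_i$ at $(i,0)$, $-\sum_i a_i$ at $s$, and $0$ elsewhere; $v^{(n,m)}(\mathbf a)$ is its number of vertices for $m\ge1$, with the convention $v^{(n,0)}(\mathbf a)=1$. $\chi(\mathbf a)\in\{0,1\}^n$ has $\chi(\mathbf a)_i=1$ iff $a_i>0$. For $\mathbf u\in\{0,1\}^n$, $\mathrm{ind}(\mathbf u)=\sum_i u_i2^{i-1}$. Dominance: $\mathbf v\trianglerighteq\mathbf w$ iff $\sum_{k\le i}v_k\ge\sum_{k\le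 i}w_k$ for all $i$. For $\mathbf v,\mathbf w$ with $\mathbf v\trianglerighteq\mathbf w$ and $\chi(\mathbf v)\trianglerighteq\chi(\mathbf w)$, let $Z_{\mathbf v}=\{i:v_i=0\}$, $Z_{\mathbf w}=\{i:w_i=0\}$ and build the matching $M$ by repeatedly matching the largest unmatched $i'\in Z_{\mathbf v}$ to the largest unmatched element of $Z_{\mathbf w}$ that is $\le i'$; $\mathbf v\trianglerighteq_1\mathbf w$ means moreover $i-j\le1$ for all $(i,j)\in M$. $A_n$ is the $2^n\times2^n$ matrix with rows and columns indexed by $\{0,1\}^n$, ordered by $\mathrm{ind}$, with $(A_n)_{\mathbf u,\mathbf v}=1$ if $\mathbf u\trianglerighteq_1\mathbf v$ and $0$ otherwise; $I$ is the $2^n\times2^n$ identity matrix. *)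

theory Defs
  imports "HOL-Computational_Algebra.Polynomial"
          "HOL-Computational_Algebra.Formal_Power_Series"
          "HOL-Computational_Algebra.Polynomial_FPS"
          "Jordan_Normal_Form.Determinant"
begin

text \<open>Vertices: Node i j stands for (i,j); Sink stands for s.\<close>
datatype gvert = Node nat nat | Sink

definition G_vertices :: "nat \<Rightarrow> nat \<Rightarrow> gvert set" where
  "G_vertices n m = {Node i j | i j. 1 \<le> i \<and> i \<le> n \<and> j \<le> m} \<union> {Sink}"

definition G_edges :: "nat \<Rightarrow> nat \<Rightarrow> (gvert \<times> gvert) set" where
  "G_edges n m =
     {(Node i j, Node i (j+1)) | i j. 1 \<le> i \<and> i \<le> n \<and> j \<le> m - 1 \<and> 1 \<le> m}
   \<union> {(Node i j, Node (i+1) j) | i j. 1 \<le> i \<and> i \<le> n - 1 \<and> j \<le> m}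
   \<union> {(Node n j, Sink) | j. j \<le> m}"

definition netflow :: "nat \<Rightarrow> nat \<Rightarrow> (gvert \<times> gvert \<Rightarrow> real) \<Rightarrow> gvert \<Rightarrow> real" where
  "netflow n m f x =
     (\<Sum>e\<in>{e \<in> G_edges n m. fst e = x}. f e) - (\<Sum>e\<in>{e \<in> G_edges n m. snd e = x}. f e)"

text \<open>Prescribed net flow: a_i at (i,0), minus the sum of the a_i at s, 0 elsewhere.
  The vector a in N^n is given as a function on the indices 1..n.\<close>
definition flow_supply :: "nat \<Rightarrow> (nat \<Rightarrow> nat) \<Rightarrow> gvert \<Rightarrow> real" where
  "flow_supply n a x = (case x of
       Node i j \<Rightarrow> (if j = 0 then real (a i) else 0)
     | Sink \<Rightarrow> - (\<Sum>i=1..n. real (a i)))"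

text \<open>The flow polytope, as a subset of R^E (weightings vanish off the edge set).\<close>
definition flow_polytope :: "nat \<Rightarrow> nat \<Rightarrow> (nat \<Rightarrow> nat) \<Rightarrow> (gvert \<times> gvert \<Rightarrow> real) set" where
  "flow_polytope n m a =
     {f. (\<forall>e. e \<notin> G_edges n m \<longrightarrow> f e = 0)
       \<and> (\<forall>e\<in>G_edges n m. 0 \<le> f e)
       \<and> (\<forall>x\<in>G_vertices n m. netflow n m f x = flow_supply n a x)}"

definition is_vertex :: "(gvert \<times> gvert \<Rightarrow> real) set \<Rightarrow> (gvert \<times> gvert \<Rightarrow> real) \<Rightarrow> bool" where
  "is_vertex P f \<longleftrightarrow> f \<in> P \<and>
     (\<forall>g\<in>P. \<forall>h\<in>P. \<forall>t::real. 0 < t \<and> t < 1 \<and> f = (\<lambda>e. (1 - t) * g e + t * h e) \<longrightarrow> g = h)"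

definition num_vertices :: "nat \<Rightarrow> nat \<Rightarrow> (nat \<Rightarrow> nat) \<Rightarrow> nat" where
  "num_vertices n m a = (if m = 0 then 1 else card {f. is_vertex (flow_polytope n m a) f})"

text \<open>Vectors are functions on indices 1..n.\<close>
definition chi :: "(nat \<Rightarrow> nat) \<Rightarrow> nat \<Rightarrow> nat" where
  "chi a = (\<lambda>i. if a i > 0 then 1 else 0)"

definition ind :: "nat \<Rightarrow> (nat \<Rightarrow> nat) \<Rightarrow> nat" where
  "ind n u = (\<Sum>i=1..n. u i * 2 ^ (i - 1))"

text \<open>The 0/1-vector u with ind u = k.\<close>
definition bitvec :: "nat \<Rightarrow> nat \<Rightarrow> nat" where
  "bitvec k = (\<lambda>i. if bit k (i - 1) then 1 else 0)"

definition dominates :: "nat \<Rightarrow> (nat \<Rightarrow> nat) \<Rightarrow> (nat \<Rightarrow> nat) \<Rightarrow> bool" where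
  "dominates n v w \<longleftrightarrow> (\<forall>i\<in>{1..n}. (\<Sum>k=1..i. w k) \<le> (\<Sum>k=1..i. v k))"

fun greedy_match :: "nat list \<Rightarrow> nat list \<Rightarrow> (nat \<times> nat) list option" where
  "greedy_match [] ws = Some []"
| "greedy_match (i # is) ws =
     (if {j \<in> set ws. j \<le> i} = {} then None
      else let j = Max {j \<in> set ws. j \<le> i} in
        map_option (Cons (i, j)) (greedy_match is (remove1 j ws)))"

definition zeros :: "nat \<Rightarrow> (nat \<Rightarrow> nat) \<Rightarrow> nat set" where
  "zeros n v = {i \<in> {1..n}. v i = 0}"

definition dominates1 :: "nat \<Rightarrow> (nat \<Rightarrow> nat) \<Rightarrow> (nat \<Rightarrow> nat) \<Rightarrow> bool" where
  "dominates1 n v w \<longleftrightarrow> dominates n v w \<and> dominates n (chi v) (chi w) \<and>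
     (case greedy_match (rev (sorted_list_of_set (zeros n v)))
                        (rev (sorted_list_of_set (zeros n w))) of
        None \<Rightarrow> False
      | Some M \<Rightarrow> (\<forall>(i, j) \<in> set M. i - j \<le> 1))"

text \<open>A_n, rows/columns indexed by 0..2^n-1 via ind.\<close>
definition A_mat :: "nat \<Rightarrow> int mat" where
  "A_mat n = mat (2 ^ n) (2 ^ n)
     (\<lambda>(r, c). if dominates1 n (bitvec r) (bitvec c) then 1 else 0)"

definition IxA :: "nat \<Rightarrow> real poly mat" where
  "IxA n = 1\<^sub>m (2 ^ n) - smult_mat [:0, 1:] (map_mat (\<lambda>z. [:real_of_int z:]) (A_mat n))"

definition Q_poly :: "nat \<Rightarrow> (nat \<Rightarrow> nat) \<Rightarrow> nat \<Rightarrow> real poly" where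
  "Q_poly n a j = det (mat_delete (IxA n) j (ind n (chi a)))"

end

theory Submission
  imports Defs
begin

text \<open>A flow on the grid \<open>G(n, m)\<close> is a vertex of the flow polytope exactly when no node
  splits its flow between its two out-edges: a splitting node lies on a circulation inside the
  support of the flow, along which the flow can be perturbed in both directions, while a
  non-splitting flow is forced node by node by conservation. Such a flow is determined by the
  0/1-vectors recording in which rows flow crosses from column \<open>j\<close> to column \<open>j + 1\<close>, and
  two consecutive vectors \<open>u, w\<close> (starting from \<open>\<chi>(a)\<close>) are compatible iff flow entering the
  rows of \<open>u\<close> and moving down can leave through exactly the rows of \<open>w\<close>; this is the relation
  \<open>u \<trianglerighteq>\<^sub>1 w\<close>. Hence \<open>v^(n,m)(a)\<close> counts walks of length \<open>m\<close> from \<open>\<chi>(a)\<close> in the digraph with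
  adjacency matrix \<open>A\<^sub>n\<close>. Their generating functions solve \<open>(I - x A\<^sub>n) v = 1\<close>, so Cramer's
  rule expresses them as cofactor sums over \<open>det (I - x A\<^sub>n)\<close>; ordering vectors by the sum of
  their partial sums makes \<open>A\<^sub>n\<close> unitriangular, whence \<open>det (I - x A\<^sub>n) = (1 - x)^(2^n)\<close>.
  Finally a power series \<open>P(x) / (1 - x)^(k + 1)\<close> with \<open>deg P \<le> k\<close> has coefficients that are a
  polynomial of degree at most \<open>k\<close> in the index.\<close>

section \<open>The relation \<open>\<trianglerighteq>\<^sub>1\<close> on 0/1-vectors\<close>

text \<open>Think of \<open>u\<close> as the rows through which flow enters a column of the grid and of \<open>w\<close>
  as the rows through which it leaves to the right; inside the column flow only moves down.\<close>

fun carries :: "(nat \<Rightarrow> nat) \<Rightarrow> (nat \<Rightarrow> nat) \<Rightarrow> nat \<Rightarrow> bool" where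
  "carries u w 0 = False"
| "carries u w (Suc i) = (u (Suc i) \<noteq> 0 \<or> (carries u w i \<and> w i = 0))"

definition routable :: "nat \<Rightarrow> (nat \<Rightarrow> nat) \<Rightarrow> (nat \<Rightarrow> nat) \<Rightarrow> bool" where
  "routable n u w \<longleftrightarrow> (\<forall>i\<in>{1..n}. w i \<noteq> 0 \<longrightarrow> carries u w i)"

definition zero_one :: "nat \<Rightarrow> (nat \<Rightarrow> nat) \<Rightarrow> bool" where
  "zero_one n u \<longleftrightarrow> (\<forall>i\<in>{1..n}. u i \<le> 1)"

lemma carries_cong:
  assumes "\<And>j. 1 \<le> j \<Longrightarrow> j \<le> i \<Longrightarrow> u j = u' j" and "\<And>j. 1 \<le> j \<Longrightarrow> j < i \<Longrightarrow> w j = w' j"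
  shows "carries u w i = carries u' w' i"
  using assms
proof (induction i)
  case (Suc i)
  then show ?case by (cases i) auto
qed simp

lemma routable_cong:
  assumes "\<And>j. j \<in> {1..n} \<Longrightarrow> u j = u' j" and "\<And>j. j \<in> {1..n} \<Longrightarrow> w j = w' j"
  shows "routable n u w = routable n u' w'"
proof -
  have "carries u w i = carries u' w' i" if "i \<in> {1..n}" for i
    by (rule carries_cong) (use assms that in auto)
  then show ?thesis
    unfolding routable_def using assms(2) by auto
qed

lemma routable_Suc:
  "routable (Suc n) u w \<longleftrightarrow> routable n u w \<and> (w (Suc n) \<noteq> 0 \<longrightarrow> carries u w (Suc n))"
proof -
  have "{1..Suc n} = insert (Suc n) {1..n}" by auto
  then show ?thesis unfolding routable_def by (auto simp del: carries.simps)
qed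

text \<open>The case in which row \<open>n + 1\<close> is fed through row \<open>n\<close>: afterwards row \<open>n\<close> must carry
  flow exactly as if it were an exit row itself.\<close>

lemma routable_Suc_through_prev:
  assumes "u (Suc n) = 0" "w (Suc n) \<noteq> 0" "1 \<le> n" "w n = 0"
  shows "routable (Suc n) u w \<longleftrightarrow> routable n u (w(n := 1))"
proof -
  have same: "carries u (w(n := 1)) i = carries u w i" if "i \<le> n" for i
    by (rule carries_cong) (use that in auto)
  have "routable n u (w(n := 1)) \<longleftrightarrow> routable n u w \<and> carries u w n"
    unfolding routable_def using same assms(3,4) by auto
  moreover have "carries u w (Suc n) = carries u w n"
    using assms(1,4) by simp
  ultimately show ?thesis
    using assms(2) by (simp add: routable_Suc)
qed

lemma routable_dominates:
  assumes "routable n u w" "zero_one n u" "zero_one n w"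
  shows "dominates n u w"
proof -
  \<comment> \<open>the extra unit is the flow passed down from row \<open>i\<close> to row \<open>i + 1\<close>\<close>
  have "(\<Sum>k=1..i. w k) + (if carries u w i \<and> w i = 0 then 1 else 0) \<le> (\<Sum>k=1..i. u k)"
    if "i \<le> n" for i
    using that
  proof (induction i)
    case (Suc i)
    have "Suc i \<in> {1..n}" using Suc.prems by simp
    then have "w (Suc i) \<noteq> 0 \<Longrightarrow> carries u w (Suc i)"
      using assms(1) unfolding routable_def by blast
    moreover have "u (Suc i) \<le> 1" "w (Suc i) \<le> 1"
      using assms(2,3) Suc.prems unfolding zero_one_def by auto
    ultimately have "w (Suc i) + (if carries u w (Suc i) \<and> w (Suc i) = 0 then 1 else 0)
        \<le> u (Suc i) + (if carries u w i \<and> w i = 0 then 1 else 0)"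
      by auto
    with Suc show ?case by simp
  qed simp
  then show ?thesis
    unfolding dominates_def by fastforce
qed

definition short_matching :: "(nat \<times> nat) list option \<Rightarrow> bool" where
  "short_matching X = (case X of None \<Rightarrow> False | Some M \<Rightarrow> (\<forall>(i, j) \<in> set M. i - j \<le> (1::nat)))"

text \<open>The greedy matching has all differences at most 1 iff each \<open>i\<close> can be matched to
  \<open>i\<close> or, failing that, to \<open>i - 1\<close>.\<close>

fun matches_within_one :: "nat list \<Rightarrow> nat set \<Rightarrow> bool" where
  "matches_within_one [] W = True"
| "matches_within_one (i # xs) W =
     (if i \<in> W then matches_within_one xs (W - {i})
      else if 1 \<le> i \<and> i - 1 \<in> W then matches_within_one xs (W - {i - 1}) else False)"

definition desc_list :: "nat set \<Rightarrow> nat list" where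
  "desc_list S = rev (sorted_list_of_set S)"

lemma short_matching_Cons: "short_matching (map_option (Cons (i, j)) X) = (i - j \<le> 1 \<and> short_matching X)"
  unfolding short_matching_def by (cases X) auto

lemma greedy_match_Cons_eq:
  assumes "j \<in> set ws" "j \<le> i" "\<And>k. k \<in> set ws \<Longrightarrow> k \<le> i \<Longrightarrow> k \<le> j"
  shows "greedy_match (i # xs) ws = map_option (Cons (i, j)) (greedy_match xs (remove1 j ws))"
proof -
  have nonempty: "{k \<in> set ws. k \<le> i} \<noteq> {}" using assms by auto
  have "Max {k \<in> set ws. k \<le> i} = j" using assms by (intro Max_eqI) auto
  with nonempty show ?thesis by (simp only: greedy_match.simps if_False Let_def)
qed

lemma not_short_matching_greedy_match_Cons:
  assumes "i \<notin> set ws" "\<not> (1 \<le> i \<and> i - 1 \<in> set ws)"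
  shows "\<not> short_matching (greedy_match (i # xs) ws)"
proof (cases "{k \<in> set ws. k \<le> i} = {}")
  case False
  let ?j = "Max {k \<in> set ws. k \<le> i}"
  have j: "?j \<in> set ws" "?j \<le> i" using Max_in[of "{k \<in> set ws. k \<le> i}"] False by auto
  then have "greedy_match (i # xs) ws = map_option (Cons (i, ?j)) (greedy_match xs (remove1 ?j ws))"
    by (intro greedy_match_Cons_eq) auto
  moreover have "\<not> i - ?j \<le> 1"
  proof
    assume "i - ?j \<le> 1"
    then have "?j = i \<or> (1 \<le> i \<and> ?j = i - 1)" using j(2) by linarith
    with j(1) assms show False by auto
  qed
  ultimately show ?thesis by (simp add: short_matching_Cons)
qed (simp add: short_matching_def)

lemma short_matching_greedy_match:
  "distinct ws \<Longrightarrow> short_matching (greedy_match xs ws) = matches_within_one xs (set ws)"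
proof (induction xs arbitrary: ws)
  case Nil then show ?case by (simp add: short_matching_def)
next
  case (Cons i xs)
  have IH: "short_matching (greedy_match xs (remove1 j ws)) = matches_within_one xs (set ws - {j})" for j
    using Cons by (simp add: set_remove1_eq)
  consider (same) "i \<in> set ws" | (prev) "i \<notin> set ws" "1 \<le> i" "i - 1 \<in> set ws"
    | (fail) "i \<notin> set ws" "\<not> (1 \<le> i \<and> i - 1 \<in> set ws)" by blast
  then show ?case
  proof cases
    case same
    then have "greedy_match (i # xs) ws = map_option (Cons (i, i)) (greedy_match xs (remove1 i ws))"
      by (intro greedy_match_Cons_eq) auto
    with same IH show ?thesis by (simp add: short_matching_Cons)
  next
    case prev
    have "greedy_match (i # xs) ws = map_option (Cons (i, i - 1)) (greedy_match xs (remove1 (i - 1) ws))"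
    proof (rule greedy_match_Cons_eq)
      show "k \<le> i - 1" if "k \<in> set ws" "k \<le> i" for k
        using that prev by (cases "k = i") auto
    qed (use prev in auto)
    with prev IH show ?thesis by (simp add: short_matching_Cons)
  next
    case fail
    then have "\<not> short_matching (greedy_match (i # xs) ws)"
      by (rule not_short_matching_greedy_match_Cons)
    moreover have "\<not> matches_within_one (i # xs) (set ws)" using fail by auto
    ultimately show ?thesis by blast
  qed
qed

lemma matches_within_one_remove_greater:
  "\<forall>i\<in>set xs. i < x \<Longrightarrow> matches_within_one xs W = matches_within_one xs (W - {x})"
proof (induction xs arbitrary: W)
  case (Cons i xs)
  then have "i \<noteq> x" "i - 1 \<noteq> x" by auto
  moreover have "W - {x} - {i} = W - {i} - {x}" "W - {x} - {i - 1} = W - {i - 1} - {x}" by auto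
  ultimately show ?case using Cons by simp
qed simp

lemma finite_zeros [simp]: "finite (zeros n v)"
  unfolding zeros_def by auto

lemma desc_list_zeros_Suc:
  "desc_list (zeros (Suc n) v) = (if v (Suc n) = 0 then Suc n # desc_list (zeros n v) else desc_list (zeros n v))"
proof -
  have zeros: "zeros (Suc n) v = (if v (Suc n) = 0 then insert (Suc n) (zeros n v) else zeros n v)"
    unfolding zeros_def by (auto simp: le_Suc_eq)
  have below: "\<forall>y\<in>zeros n v. y < Suc n" by (auto simp: zeros_def)
  then have "sorted_list_of_set (insert (Suc n) (zeros n v)) = insort (Suc n) (sorted_list_of_set (zeros n v))"
    by (auto simp: sorted_list_of_set_insert)
  also have "\<dots> = sorted_list_of_set (zeros n v) @ [Suc n]"
    using below by (intro sorted_insort_is_snoc) auto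
  finally show ?thesis
    unfolding zeros desc_list_def by simp
qed

lemma matches_within_one_zeros_Suc:
  "matches_within_one (desc_list (zeros (Suc n) u)) (zeros (Suc n) w) \<longleftrightarrow>
    (if u (Suc n) \<noteq> 0 \<or> w (Suc n) = 0 then matches_within_one (desc_list (zeros n u)) (zeros n w)
     else 1 \<le> n \<and> w n = 0 \<and> matches_within_one (desc_list (zeros n u)) (zeros n (w(n := 1))))"
proof -
  let ?xs = "desc_list (zeros n u)"
  have below: "\<forall>i\<in>set ?xs. i < Suc n"
    by (auto simp: desc_list_def zeros_def)
  have zeros_w: "zeros (Suc n) w - {Suc n} = zeros n w"
    unfolding zeros_def by auto
  consider (fed) "u (Suc n) \<noteq> 0" | (no_exit) "u (Suc n) = 0" "w (Suc n) = 0"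
    | (exit) "u (Suc n) = 0" "w (Suc n) \<noteq> 0"
    by auto
  then show ?thesis
  proof cases
    case fed
    then show ?thesis
      using matches_within_one_remove_greater[OF below, of "zeros (Suc n) w"] zeros_w
      by (simp add: desc_list_zeros_Suc)
  next
    case no_exit
    then have "Suc n \<in> zeros (Suc n) w" by (simp add: zeros_def)
    with no_exit zeros_w show ?thesis by (simp add: desc_list_zeros_Suc)
  next
    case exit
    then have "Suc n \<notin> zeros (Suc n) w" "n \<in> zeros (Suc n) w \<longleftrightarrow> 1 \<le> n \<and> w n = 0"
      by (auto simp: zeros_def)
    moreover have "zeros (Suc n) w - {n} = zeros n (w(n := 1))"
      using exit unfolding zeros_def by (auto simp: le_Suc_eq)
    ultimately show ?thesis
      using exit by (simp add: desc_list_zeros_Suc)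
  qed
qed

lemma routable_Suc_iff:
  "routable (Suc n) u w \<longleftrightarrow>
    (if u (Suc n) \<noteq> 0 \<or> w (Suc n) = 0 then routable n u w
     else 1 \<le> n \<and> w n = 0 \<and> routable n u (w(n := 1)))"
proof (cases "u (Suc n) \<noteq> 0 \<or> w (Suc n) = 0")
  case False
  then have u: "u (Suc n) = 0" and w: "w (Suc n) \<noteq> 0" by auto
  show ?thesis
  proof (cases "1 \<le> n \<and> w n = 0")
    case True
    then show ?thesis using routable_Suc_through_prev[of u n w] u w by simp
  next
    case False
    then have "\<not> carries u w (Suc n)" using u by (cases n) auto
    then have "\<not> routable (Suc n) u w" using w by (simp add: routable_Suc del: carries.simps)
    then show ?thesis using False u w by simp
  qed
qed (auto simp: routable_Suc)

lemma matches_within_one_iff_routable: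
  "matches_within_one (desc_list (zeros n u)) (zeros n w) \<longleftrightarrow> routable n u w"
proof (induction n arbitrary: w)
  case 0
  have "zeros 0 u = {}" unfolding zeros_def by auto
  then show ?case by (simp add: routable_def desc_list_def)
next
  case (Suc n)
  then show ?case by (simp only: matches_within_one_zeros_Suc routable_Suc_iff)
qed

lemma chi_zero_one: "zero_one n u \<Longrightarrow> i \<in> {1..n} \<Longrightarrow> chi u i = u i"
  unfolding zero_one_def chi_def by fastforce

lemma dominates_cong:
  assumes "\<And>j. j \<in> {1..n} \<Longrightarrow> u j = u' j" and "\<And>j. j \<in> {1..n} \<Longrightarrow> w j = w' j"
  shows "dominates n u w = dominates n u' w'"
proof -
  have "(\<Sum>k=1..i. u k) = (\<Sum>k=1..i. u' k) \<and> (\<Sum>k=1..i. w k) = (\<Sum>k=1..i. w' k)"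
    if "i \<in> {1..n}" for i
    using assms that by (auto intro!: sum.cong)
  then show ?thesis unfolding dominates_def by auto
qed

text \<open>For 0/1-vectors the two dominance conditions in \<open>\<trianglerighteq>\<^sub>1\<close> are implied by the
  matching condition, which is equivalent to routability.\<close>

theorem dominates1_iff_routable:
  assumes "zero_one n u" "zero_one n w"
  shows "dominates1 n u w \<longleftrightarrow> routable n u w"
proof -
  have "short_matching (greedy_match (desc_list (zeros n u)) (desc_list (zeros n w))) = routable n u w"
    using short_matching_greedy_match matches_within_one_iff_routable
    by (simp add: desc_list_def)
  moreover have "dominates n (chi u) (chi w) = dominates n u w"
    by (rule dominates_cong) (use chi_zero_one assms in auto)
  ultimately show ?thesis
    unfolding dominates1_def short_matching_def[symmetric] desc_list_def[symmetric]
    using routable_dominates[OF _ assms] by auto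
qed

lemma zero_one_bitvec: "zero_one n (bitvec r)"
  unfolding zero_one_def bitvec_def by auto

lemma zero_one_chi: "zero_one n (chi a)"
  unfolding zero_one_def chi_def by auto

lemma ind_Suc: "ind (Suc n) u = ind n u + u (Suc n) * 2 ^ n"
  unfolding ind_def by (simp add: sum.cl_ivl_Suc)

lemma ind_cong: "(\<And>i. i \<in> {1..n} \<Longrightarrow> u i = v i) \<Longrightarrow> ind n u = ind n v"
  unfolding ind_def by (auto intro!: sum.cong)

lemma bit_mod_power_two: "k < n \<Longrightarrow> bit ((r::nat) mod 2 ^ n) k = bit r k"
  by (metis bit_take_bit_iff take_bit_eq_mod)

lemma ind_bitvec: "r < 2 ^ n \<Longrightarrow> ind n (bitvec r) = r"
proof (induction n arbitrary: r)
  case 0 then show ?case by (simp add: ind_def)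
next
  case (Suc n)
  have "ind n (bitvec r) = ind n (bitvec (r mod 2 ^ n))"
    by (rule ind_cong) (auto simp: bitvec_def bit_mod_power_two)
  also have "\<dots> = r mod 2 ^ n" by (rule Suc.IH) simp
  finally have low: "ind n (bitvec r) = r mod 2 ^ n" .
  have "r div 2 ^ n < 2" using Suc.prems by (simp add: div_less_iff_less_mult mult.commute)
  then have "r div 2 ^ n = 0 \<or> r div 2 ^ n = 1" by linarith
  then have high: "bitvec r (Suc n) = r div 2 ^ n"
    unfolding bitvec_def by (auto simp: bit_iff_odd)
  show ?case unfolding ind_Suc low high by (simp add: mult.commute)
qed

lemma ind_less: "zero_one n u \<Longrightarrow> ind n u < 2 ^ n"
proof (induction n)
  case (Suc n)
  then have "ind n u < 2 ^ n" "u (Suc n) \<le> 1" by (auto simp: zero_one_def)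
  then have "ind n u + u (Suc n) * 2 ^ n < 2 ^ n + 1 * 2 ^ n"
    by (metis add_less_le_mono mult_le_mono1)
  then show ?case unfolding ind_Suc by simp
qed (simp add: ind_def)

lemma bitvec_ind: "zero_one n u \<Longrightarrow> i \<in> {1..n} \<Longrightarrow> bitvec (ind n u) i = u i"
proof (induction n arbitrary: i)
  case (Suc n)
  have u: "zero_one n u" "u (Suc n) \<le> 1" using Suc.prems unfolding zero_one_def by auto
  have "ind n u < 2 ^ n" by (rule ind_less[OF u(1)])
  then have mod: "ind (Suc n) u mod 2 ^ n = ind n u" and div: "ind (Suc n) u div 2 ^ n = u (Suc n)"
    unfolding ind_Suc by simp_all
  show ?case
  proof (cases "i = Suc n")
    case True
    then show ?thesis using u(2) div unfolding bitvec_def by (cases "u (Suc n)") (auto simp: bit_iff_odd)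
  next
    case False
    then have i: "i \<in> {1..n}" using Suc.prems by auto
    then have "bit (ind (Suc n) u) (i - 1) = bit (ind n u) (i - 1)"
      using bit_mod_power_two[of "i - 1" n "ind (Suc n) u"] mod by auto
    then show ?thesis using Suc.IH[OF u(1) i] unfolding bitvec_def by simp
  qed
qed simp

lemma A_mat_entry:
  assumes "r < 2 ^ n" "c < 2 ^ n"
  shows "A_mat n $$ (r, c) = (if routable n (bitvec r) (bitvec c) then 1 else 0)"
  using assms dominates1_iff_routable[OF zero_one_bitvec zero_one_bitvec]
  unfolding A_mat_def by simp

lemma A_mat_nonzero_dominates:
  assumes "r < 2 ^ n" "c < 2 ^ n" "A_mat n $$ (r, c) \<noteq> 0"
  shows "dominates n (bitvec r) (bitvec c)"
  using assms A_mat_entry[OF assms(1,2)] routable_dominates[OF _ zero_one_bitvec zero_one_bitvec]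
  by (auto split: if_splits)

lemma A_mat_diag:
  assumes "r < 2 ^ n"
  shows "A_mat n $$ (r, r) = 1"
proof -
  have "carries u u i" if "1 \<le> i" "u i \<noteq> 0" for u i
    using that by (cases i) auto
  then show ?thesis
    using assms by (simp add: A_mat_entry routable_def)
qed

section \<open>Local description of the flow polytope\<close>

definition below :: "nat \<Rightarrow> nat \<Rightarrow> nat \<Rightarrow> gvert" where
  "below n i j = (if i < n then Node (Suc i) j else Sink)"

definition flow_right :: "(gvert \<times> gvert \<Rightarrow> real) \<Rightarrow> nat \<Rightarrow> nat \<Rightarrow> real" where
  "flow_right f i j = f (Node i j, Node i (Suc j))"

definition flow_down :: "nat \<Rightarrow> (gvert \<times> gvert \<Rightarrow> real) \<Rightarrow> nat \<Rightarrow> nat \<Rightarrow> real" where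
  "flow_down n f i j = f (Node i j, below n i j)"

definition flow_in :: "nat \<Rightarrow> (gvert \<times> gvert \<Rightarrow> real) \<Rightarrow> nat \<Rightarrow> nat \<Rightarrow> real" where
  "flow_in n f i j =
     (if 0 < j then flow_right f i (j - 1) else 0) + (if 1 < i then flow_down n f (i - 1) j else 0)"

definition vanishes_off_edges :: "nat \<Rightarrow> nat \<Rightarrow> (gvert \<times> gvert \<Rightarrow> real) \<Rightarrow> bool" where
  "vanishes_off_edges n m f \<longleftrightarrow> (\<forall>e. e \<notin> G_edges n m \<longrightarrow> f e = 0)"

definition conserves :: "nat \<Rightarrow> nat \<Rightarrow> (nat \<Rightarrow> nat \<Rightarrow> real) \<Rightarrow> (gvert \<times> gvert \<Rightarrow> real) \<Rightarrow> bool" where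
  "conserves n m s f \<longleftrightarrow> (\<forall>i j. 1 \<le> i \<longrightarrow> i \<le> n \<longrightarrow> j \<le> m \<longrightarrow>
      flow_right f i j + flow_down n f i j = s i j + flow_in n f i j)"

definition node_supply :: "(nat \<Rightarrow> nat) \<Rightarrow> nat \<Rightarrow> nat \<Rightarrow> real" where
  "node_supply a i j = (if j = 0 then real (a i) else 0)"

lemma right_edge_in_G_edges: "1 \<le> i \<Longrightarrow> i \<le> n \<Longrightarrow> j < m \<Longrightarrow> (Node i j, Node i (Suc j)) \<in> G_edges n m"
  unfolding G_edges_def by auto

lemma right_edge_notin_G_edges: "m \<le> j \<Longrightarrow> (Node i j, Node i (Suc j)) \<notin> G_edges n m"
  unfolding G_edges_def by auto

lemma down_edge_in_G_edges: "1 \<le> i \<Longrightarrow> i \<le> n \<Longrightarrow> j \<le> m \<Longrightarrow> (Node i j, below n i j) \<in> G_edges n m"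
  unfolding G_edges_def below_def by (cases "i < n") auto

lemma G_edges_iff:
  assumes "1 \<le> n"
  shows "e \<in> G_edges n m \<longleftrightarrow>
     (\<exists>i j. 1 \<le> i \<and> i \<le> n \<and> j < m \<and> e = (Node i j, Node i (Suc j))) \<or>
     (\<exists>i j. 1 \<le> i \<and> i \<le> n \<and> j \<le> m \<and> e = (Node i j, below n i j))"
proof
  assume "e \<in> G_edges n m"
  then consider
      (right) i j where "1 \<le> i" "i \<le> n" "j < m" "e = (Node i j, Node i (Suc j))"
    | (down) i j where "1 \<le> i" "i < n" "j \<le> m" "e = (Node i j, Node (Suc i) j)"
    | (sink) j where "j \<le> m" "e = (Node n j, Sink)"
    unfolding G_edges_def by fastforce
  then show "(\<exists>i j. 1 \<le> i \<and> i \<le> n \<and> j < m \<and> e = (Node i j, Node i (Suc j))) \<or>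
     (\<exists>i j. 1 \<le> i \<and> i \<le> n \<and> j \<le> m \<and> e = (Node i j, below n i j))"
  proof cases
    case down
    then show ?thesis unfolding below_def by force
  next
    case sink
    then show ?thesis using assms unfolding below_def by force
  qed blast
qed (use right_edge_in_G_edges down_edge_in_G_edges in auto)

lemma finite_G_edges: "1 \<le> n \<Longrightarrow> finite (G_edges n m)"
proof -
  assume "1 \<le> n"
  then have "G_edges n m \<subseteq> (\<lambda>(i, j). (Node i j, Node i (Suc j))) ` ({1..n} \<times> {0..<m})
      \<union> (\<lambda>(i, j). (Node i j, below n i j)) ` ({1..n} \<times> {0..m})"
    using G_edges_iff by fastforce
  then show ?thesis by (rule finite_subset) auto
qed

lemma G_vertices_eq: "G_vertices n m = insert Sink ((\<lambda>(i, j). Node i j) ` ({1..n} \<times> {0..m}))"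
  unfolding G_vertices_def by auto

lemma G_edges_in_G_vertices:
  assumes "1 \<le> n" "e \<in> G_edges n m"
  shows "fst e \<in> G_vertices n m" "snd e \<in> G_vertices n m"
  using assms unfolding G_edges_iff[OF assms(1)] G_vertices_def by (auto simp: below_def split: if_splits)

lemma out_edges_Node:
  assumes "1 \<le> i" "i \<le> n" "j \<le> m"
  shows "{e \<in> G_edges n m. fst e = Node i j} =
    (if j < m then {(Node i j, Node i (Suc j))} else {}) \<union> {(Node i j, below n i j)}"
  using assms right_edge_in_G_edges[OF assms(1,2)] down_edge_in_G_edges[OF assms]
  unfolding G_edges_iff[of n, OF order.trans[OF assms(1,2)]] by auto

lemma in_edges_Node:
  assumes "1 \<le> i" "i \<le> n" "j \<le> m"
  shows "{e \<in> G_edges n m. snd e = Node i j} =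
    (if 0 < j then {(Node i (j - 1), Node i j)} else {}) \<union>
    (if 1 < i then {(Node (i - 1) j, below n (i - 1) j)} else {})"
proof -
  have "1 < i \<Longrightarrow> below n (i - 1) j = Node i j" using assms unfolding below_def by auto
  moreover have "0 < j \<Longrightarrow> (Node i (j - 1), Node i j) \<in> G_edges n m"
    using right_edge_in_G_edges[of i n "j - 1" m] assms by auto
  moreover have "1 < i \<Longrightarrow> (Node (i - 1) j, below n (i - 1) j) \<in> G_edges n m"
    using down_edge_in_G_edges[of "i - 1" n j m] assms by auto
  ultimately show ?thesis
    using assms unfolding G_edges_iff[of n, OF order.trans[OF assms(1,2)]]
    by (auto simp: below_def split: if_splits)
qed

lemma netflow_Node:
  assumes "1 \<le> i" "i \<le> n" "j \<le> m" "vanishes_off_edges n m f"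
  shows "netflow n m f (Node i j) = flow_right f i j + flow_down n f i j - flow_in n f i j"
proof -
  have "\<not> j < m \<Longrightarrow> flow_right f i j = 0"
    using assms(4) right_edge_notin_G_edges[of m j i n]
    unfolding vanishes_off_edges_def flow_right_def by auto
  then have "(\<Sum>e\<in>{e \<in> G_edges n m. fst e = Node i j}. f e) = flow_right f i j + flow_down n f i j"
    unfolding out_edges_Node[OF assms(1-3)] flow_right_def flow_down_def by (auto simp: below_def)
  moreover have "(\<Sum>e\<in>{e \<in> G_edges n m. snd e = Node i j}. f e) = flow_in n f i j"
    unfolding in_edges_Node[OF assms(1-3)] flow_in_def flow_right_def flow_down_def
    by (auto simp: below_def)
  ultimately show ?thesis unfolding netflow_def by simp
qed

lemma sum_netflow_eq_0:
  assumes "1 \<le> n"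
  shows "(\<Sum>x\<in>G_vertices n m. netflow n m f x) = 0"
proof -
  have "(\<Sum>x\<in>G_vertices n m. \<Sum>e\<in>{e \<in> G_edges n m. fst e = x}. f e) = sum f (G_edges n m)"
    "(\<Sum>x\<in>G_vertices n m. \<Sum>e\<in>{e \<in> G_edges n m. snd e = x}. f e) = sum f (G_edges n m)"
    by (rule sum.group[OF finite_G_edges[OF assms]], simp add: G_vertices_eq,
        use G_edges_in_G_vertices[OF assms] in auto)+
  then show ?thesis unfolding netflow_def sum_subtractf by simp
qed

lemma netflow_Sink:
  assumes "1 \<le> n"
  shows "netflow n m f Sink = - (\<Sum>i=1..n. \<Sum>j=0..m. netflow n m f (Node i j))"
proof -
  have "(\<Sum>x\<in>G_vertices n m. netflow n m f x) =
      netflow n m f Sink + (\<Sum>x\<in>(\<lambda>(i, j). Node i j) ` ({1..n} \<times> {0..m}). netflow n m f x)"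
    unfolding G_vertices_eq by (subst sum.insert) auto
  also have "(\<Sum>x\<in>(\<lambda>(i, j). Node i j) ` ({1..n} \<times> {0..m}). netflow n m f x)
      = (\<Sum>(i, j)\<in>{1..n} \<times> {0..m}. netflow n m f (Node i j))"
    by (subst sum.reindex) (auto simp: inj_on_def case_prod_beta)
  also have "\<dots> = (\<Sum>i=1..n. \<Sum>j=0..m. netflow n m f (Node i j))"
    by (rule sum.cartesian_product[symmetric])
  finally show ?thesis using sum_netflow_eq_0[OF assms, of m f] by simp
qed

text \<open>The condition at the sink is redundant, since net flows always sum to zero.\<close>

lemma flow_polytope_iff:
  assumes "1 \<le> n"
  shows "f \<in> flow_polytope n m a \<longleftrightarrow>
    vanishes_off_edges n m f \<and> (\<forall>e\<in>G_edges n m. 0 \<le> f e) \<and> conserves n m (node_supply a) f"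
proof -
  have netflow: "netflow n m f (Node i j) = flow_supply n a (Node i j) \<longleftrightarrow>
      flow_right f i j + flow_down n f i j = node_supply a i j + flow_in n f i j"
    if "vanishes_off_edges n m f" "1 \<le> i" "i \<le> n" "j \<le> m" for i j
    using netflow_Node[OF that(2-4,1)] unfolding flow_supply_def node_supply_def by auto
  have sink: "netflow n m f Sink = flow_supply n a Sink"
    if "vanishes_off_edges n m f" "conserves n m (node_supply a) f"
  proof -
    have "netflow n m f Sink = - (\<Sum>i=1..n. \<Sum>j=0..m. node_supply a i j)"
      unfolding netflow_Sink[OF assms] using that netflow unfolding conserves_def
      by (auto simp: flow_supply_def node_supply_def intro!: sum.cong)
    also have "(\<Sum>i=1..n. \<Sum>j=0..m. node_supply a i j) = (\<Sum>i=1..n. real (a i))"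
      unfolding node_supply_def by (intro sum.cong refl) (simp add: sum.delta)
    finally show ?thesis unfolding flow_supply_def by simp
  qed
  show ?thesis
    unfolding flow_polytope_def vanishes_off_edges_def[symmetric] G_vertices_def conserves_def
    using netflow sink[unfolded conserves_def] by auto
qed

lemma flow_right_last_column: "vanishes_off_edges n m f \<Longrightarrow> m \<le> j \<Longrightarrow> flow_right f i j = 0"
  using right_edge_notin_G_edges unfolding vanishes_off_edges_def flow_right_def by blast

lemma flow_right_nonneg: "f \<in> flow_polytope n m a \<Longrightarrow> 1 \<le> i \<Longrightarrow> i \<le> n \<Longrightarrow> 0 \<le> flow_right f i j"
  using right_edge_in_G_edges[of i n j m] right_edge_notin_G_edges[of m j i n]
  unfolding flow_polytope_def flow_right_def by (cases "j < m") auto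

lemma flow_down_nonneg:
  "f \<in> flow_polytope n m a \<Longrightarrow> 1 \<le> i \<Longrightarrow> i \<le> n \<Longrightarrow> j \<le> m \<Longrightarrow> 0 \<le> flow_down n f i j"
  using down_edge_in_G_edges[of i n j m] unfolding flow_polytope_def flow_down_def by blast

lemma flow_in_nonneg:
  "f \<in> flow_polytope n m a \<Longrightarrow> 1 \<le> i \<Longrightarrow> i \<le> n \<Longrightarrow> j \<le> m \<Longrightarrow> 0 \<le> flow_in n f i j"
  unfolding flow_in_def using flow_right_nonneg flow_down_nonneg[of f n m a "i - 1" j] by auto

lemma node_supply_nonneg: "0 \<le> node_supply a i j"
  unfolding node_supply_def by simp

lemma flow_polytope_conserves:
  assumes "1 \<le> n" "f \<in> flow_polytope n m a" "1 \<le> i" "i \<le> n" "j \<le> m"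
  shows "flow_right f i j + flow_down n f i j = node_supply a i j + flow_in n f i j"
  using assms unfolding flow_polytope_iff[OF assms(1)] conserves_def by blast

lemma flow_in_pos_iff:
  assumes "f \<in> flow_polytope n m a" "1 \<le> i" "i \<le> n" "j \<le> m"
  shows "0 < flow_in n f i j \<longleftrightarrow>
    (0 < j \<and> 0 < flow_right f i (j - 1)) \<or> (1 < i \<and> 0 < flow_down n f (i - 1) j)"
proof -
  have "0 \<le> flow_right f i (j - 1)" "1 < i \<Longrightarrow> 0 \<le> flow_down n f (i - 1) j"
    using assms flow_right_nonneg flow_down_nonneg[OF assms(1), of "i - 1" j] by auto
  then show ?thesis unfolding flow_in_def by (auto simp: add_pos_nonneg add_nonneg_pos)
qed

lemma conserves_lincomb:
  assumes "conserves n m s f" "conserves n m s' g"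
  shows "conserves n m (\<lambda>i j. c * s i j + d * s' i j) (\<lambda>e. c * f e + d * g e)"
  unfolding conserves_def
proof (intro allI impI)
  fix i j assume "1 \<le> i" "i \<le> n" "j \<le> m"
  then have "c * (flow_right f i j + flow_down n f i j) + d * (flow_right g i j + flow_down n g i j)
      = c * (s i j + flow_in n f i j) + d * (s' i j + flow_in n g i j)"
    using assms unfolding conserves_def by simp
  then show "flow_right (\<lambda>e. c * f e + d * g e) i j + flow_down n (\<lambda>e. c * f e + d * g e) i j
      = c * s i j + d * s' i j + flow_in n (\<lambda>e. c * f e + d * g e) i j"
    unfolding flow_right_def flow_down_def flow_in_def by (simp add: algebra_simps)
qed

lemma flow_eqI:
  assumes "1 \<le> n" "vanishes_off_edges n m f" "vanishes_off_edges n m g"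
    and "\<And>i j. 1 \<le> i \<Longrightarrow> i \<le> n \<Longrightarrow> j < m \<Longrightarrow> flow_right f i j = flow_right g i j"
    and "\<And>i j. 1 \<le> i \<Longrightarrow> i \<le> n \<Longrightarrow> j \<le> m \<Longrightarrow> flow_down n f i j = flow_down n g i j"
  shows "f = g"
proof
  fix e
  show "f e = g e"
  proof (cases "e \<in> G_edges n m")
    case True
    then show ?thesis
      using assms(4,5) unfolding G_edges_iff[OF assms(1)] flow_right_def flow_down_def by auto
  next
    case False
    then show ?thesis using assms(2,3) unfolding vanishes_off_edges_def by metis
  qed
qed

text \<open>Conservation determines the outflow of a node from its inflow, which comes from nodes
  with smaller coordinate sum; a common vanishing out-edge then fixes both out-edges.\<close>

lemma flow_polytope_eqI:
  assumes n: "1 \<le> n" and f: "f \<in> flow_polytope n m a" and g: "g \<in> flow_polytope n m a"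
    and common_zero: "\<And>i j. 1 \<le> i \<Longrightarrow> i \<le> n \<Longrightarrow> j \<le> m \<Longrightarrow>
       (flow_right f i j = 0 \<and> flow_right g i j = 0) \<or> (flow_down n f i j = 0 \<and> flow_down n g i j = 0)"
  shows "f = g"
proof -
  have "flow_right f i j = flow_right g i j \<and> flow_down n f i j = flow_down n g i j"
    if "1 \<le> i" "i \<le> n" "j \<le> m" for i j
    using that
  proof (induction "i + j" arbitrary: i j rule: less_induct)
    case less
    have "flow_in n f i j = flow_in n g i j"
      using less.hyps[of i "j - 1"] less.hyps[of "i - 1" j] less.prems unfolding flow_in_def by auto
    moreover have "flow_right f i j + flow_down n f i j = node_supply a i j + flow_in n f i j"
      "flow_right g i j + flow_down n g i j = node_supply a i j + flow_in n g i j"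
      using f g less.prems unfolding flow_polytope_iff[OF n] conserves_def by auto
    ultimately show ?case using common_zero[OF less.prems] by auto
  qed
  then show ?thesis
    using f g unfolding flow_polytope_iff[OF n] by (intro flow_eqI[OF n]) auto
qed

section \<open>Vertices of the flow polytope\<close>

definition branchless :: "nat \<Rightarrow> nat \<Rightarrow> (gvert \<times> gvert \<Rightarrow> real) \<Rightarrow> bool" where
  "branchless n m f \<longleftrightarrow>
     (\<forall>i j. 1 \<le> i \<longrightarrow> i \<le> n \<longrightarrow> j \<le> m \<longrightarrow> flow_right f i j = 0 \<or> flow_down n f i j = 0)"

lemma branchless_is_vertex:
  assumes n: "1 \<le> n" and f: "f \<in> flow_polytope n m a" and branchless: "branchless n m f"
  shows "is_vertex (flow_polytope n m a) f"
  unfolding is_vertex_def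
proof (intro conjI ballI allI impI)
  fix g h t assume g: "g \<in> flow_polytope n m a" and h: "h \<in> flow_polytope n m a"
    and t: "0 < t \<and> t < 1 \<and> f = (\<lambda>e. (1 - t) * g e + t * h e)"
  have zero: "g e = 0 \<and> h e = 0" if "f e = 0" for e
  proof (cases "e \<in> G_edges n m")
    case True
    then have "0 \<le> g e" "0 \<le> h e" using g h unfolding flow_polytope_def by auto
    moreover have "(1 - t) * g e + t * h e = 0" using t that by simp
    ultimately show ?thesis using t
      by (smt (verit, best) mult_pos_pos mult_nonneg_nonneg zero_less_mult_iff)
  next
    case False
    then show ?thesis using g h unfolding flow_polytope_iff[OF n] vanishes_off_edges_def by blast
  qed
  have "f = k" if k: "k \<in> flow_polytope n m a" "\<And>e. f e = 0 \<Longrightarrow> k e = 0" for k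
    using branchless k(2)
    by (intro flow_polytope_eqI[OF n f k(1)]) (auto simp: branchless_def flow_right_def flow_down_def)
  then show "g = h" using g h zero by metis
qed (rule f)

text \<open>Node \<open>(i, j)\<close> passes everything it receives (its supply \<open>s i j\<close> plus its inflow) to
  the right if \<open>goes_right i j\<close> and downwards otherwise; \<open>throughput\<close> is the amount passing
  through a node.\<close>

function throughput :: "(nat \<Rightarrow> nat \<Rightarrow> bool) \<Rightarrow> (nat \<Rightarrow> nat \<Rightarrow> real) \<Rightarrow> nat \<Rightarrow> nat \<Rightarrow> real" where
  "throughput goes_right s i j = s i j
      + (if 0 < j \<and> goes_right i (j - 1) then throughput goes_right s i (j - 1) else 0)
      + (if 1 < i \<and> \<not> goes_right (i - 1) j then throughput goes_right s (i - 1) j else 0)"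
  by pat_completeness auto

termination by (relation "measure (\<lambda>(_, _, i, j). i + j)") auto

declare throughput.simps [simp del]

definition routing_flow ::
  "nat \<Rightarrow> nat \<Rightarrow> (nat \<Rightarrow> nat \<Rightarrow> bool) \<Rightarrow> (nat \<Rightarrow> nat \<Rightarrow> real) \<Rightarrow> gvert \<times> gvert \<Rightarrow> real" where
  "routing_flow n m goes_right s e = (if e \<in> G_edges n m then
     (case fst e of
        Node i j \<Rightarrow>
          if (snd e = Node i (Suc j)) = goes_right i j then throughput goes_right s i j else 0
      | Sink \<Rightarrow> 0) else 0)"

lemma throughput_nonneg: "(\<And>i j. 0 \<le> s i j) \<Longrightarrow> 0 \<le> throughput goes_right s i j"
proof (induction goes_right s i j rule: throughput.induct)
  case (1 goes_right s i j)
  then show ?case by (subst throughput.simps) (auto intro!: add_nonneg_nonneg)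
qed

lemma throughput_eq_0:
  "(\<And>i' j'. i' \<le> i \<Longrightarrow> j' \<le> j \<Longrightarrow> s i' j' = 0) \<Longrightarrow> throughput goes_right s i j = 0"
proof (induction goes_right s i j rule: throughput.induct)
  case (1 goes_right s i j)
  then show ?case by (subst throughput.simps) auto
qed

lemma flow_right_routing_flow:
  "1 \<le> i \<Longrightarrow> i \<le> n \<Longrightarrow>
   flow_right (routing_flow n m goes_right s) i j = (if j < m \<and> goes_right i j then throughput goes_right s i j else 0)"
  unfolding flow_right_def routing_flow_def
  using right_edge_in_G_edges[of i n j m] right_edge_notin_G_edges[of m j i n] by auto

lemma flow_down_routing_flow:
  "1 \<le> i \<Longrightarrow> i \<le> n \<Longrightarrow> j \<le> m \<Longrightarrow>
   flow_down n (routing_flow n m goes_right s) i j = (if goes_right i j then 0 else throughput goes_right s i j)"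
  unfolding flow_down_def routing_flow_def using down_edge_in_G_edges[of i n j m]
  by (auto simp: below_def)

lemma vanishes_off_edges_routing_flow: "vanishes_off_edges n m (routing_flow n m goes_right s)"
  unfolding vanishes_off_edges_def routing_flow_def by auto

lemma routing_flow_nonneg: "(\<And>i j. 0 \<le> s i j) \<Longrightarrow> 0 \<le> routing_flow n m goes_right s e"
  unfolding routing_flow_def using throughput_nonneg by (auto split: gvert.split)

lemma branchless_routing_flow: "branchless n m (routing_flow n m goes_right s)"
  unfolding branchless_def using flow_right_routing_flow flow_down_routing_flow by auto

lemma conserves_routing_flow:
  assumes "\<And>i j. goes_right i j \<Longrightarrow> j < m"
  shows "conserves n m s (routing_flow n m goes_right s)"
  unfolding conserves_def
proof (intro allI impI)
  fix i j assume ij: "1 \<le> i" "i \<le> n" "j \<le> m"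
  let ?f = "routing_flow n m goes_right s"
  have "flow_in n ?f i j =
     (if 0 < j \<and> goes_right i (j - 1) then throughput goes_right s i (j - 1) else 0)
      + (if 1 < i \<and> \<not> goes_right (i - 1) j then throughput goes_right s (i - 1) j else 0)"
    unfolding flow_in_def using ij flow_right_routing_flow flow_down_routing_flow[of "i - 1" n j m] by auto
  moreover have "flow_right ?f i j + flow_down n ?f i j = throughput goes_right s i j"
    using flow_right_routing_flow[OF ij(1,2)] flow_down_routing_flow[OF ij] assms[of i j] by auto
  ultimately show "flow_right ?f i j + flow_down n ?f i j = s i j + flow_in n ?f i j"
    by (subst (asm) throughput.simps) simp
qed

lemma throughput_pos_iff:
  assumes "\<And>i j. 0 \<le> s i j"
  shows "0 < throughput goes_right s i j \<longleftrightarrow> 0 < s i j \<or>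
    (0 < j \<and> goes_right i (j - 1) \<and> 0 < throughput goes_right s i (j - 1)) \<or>
    (1 < i \<and> \<not> goes_right (i - 1) j \<and> 0 < throughput goes_right s (i - 1) j)"
proof -
  let ?left = "if 0 < j \<and> goes_right i (j - 1) then throughput goes_right s i (j - 1) else 0"
  let ?above = "if 1 < i \<and> \<not> goes_right (i - 1) j then throughput goes_right s (i - 1) j else 0"
  have "0 \<le> s i j" "0 \<le> ?left" "0 \<le> ?above"
    using assms throughput_nonneg[OF assms] by simp_all
  then have pos: "0 < s i j + ?left + ?above \<longleftrightarrow> 0 < s i j \<or> 0 < ?left \<or> 0 < ?above"
    by linarith
  have "throughput goes_right s i j = s i j + ?left + ?above"
    by (rule throughput.simps)
  also note pos
  finally show ?thesis by auto
qed

lemma outflow_pos_if_throughput_pos: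
  assumes n: "1 \<le> n" and f: "f \<in> flow_polytope n m a"
    and fed: "\<And>i j. 1 \<le> i \<Longrightarrow> i \<le> n \<Longrightarrow> j \<le> m \<Longrightarrow> s i j \<noteq> 0 \<Longrightarrow> 0 < flow_in n f i j"
  shows "1 \<le> i \<Longrightarrow> i \<le> n \<Longrightarrow> j \<le> m \<Longrightarrow> throughput (\<lambda>i j. 0 < flow_right f i j) s i j \<noteq> 0 \<Longrightarrow>
    0 < flow_right f i j + flow_down n f i j"
proof (induction "i + j" arbitrary: i j rule: less_induct)
  case less
  let ?goes_right = "\<lambda>i j. 0 < flow_right f i j"
  have "0 < flow_in n f i j"
  proof -
    have "s i j \<noteq> 0 \<or> (0 < j \<and> ?goes_right i (j - 1)) \<or>
        (1 < i \<and> \<not> ?goes_right (i - 1) j \<and> throughput ?goes_right s (i - 1) j \<noteq> 0)"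
      using less.prems(4) by (subst (asm) throughput.simps) (auto split: if_splits)
    moreover have "0 < flow_down n f (i - 1) j"
      if "1 < i" "\<not> ?goes_right (i - 1) j" "throughput ?goes_right s (i - 1) j \<noteq> 0"
      using less.hyps[of "i - 1" j] that less.prems flow_right_nonneg[OF f, of "i - 1" j] by force
    ultimately show ?thesis
      using fed[OF less.prems(1-3)] flow_in_pos_iff[OF f less.prems(1-3)] by blast
  qed
  then show ?case
    using flow_polytope_conserves[OF n f less.prems(1-3)] node_supply_nonneg[of a i j] by linarith
qed

lemma routing_flow_support:
  assumes n: "1 \<le> n" and f: "f \<in> flow_polytope n m a" and s: "\<And>i j. 0 \<le> s i j"
    and fed: "\<And>i j. 1 \<le> i \<Longrightarrow> i \<le> n \<Longrightarrow> j \<le> m \<Longrightarrow> s i j \<noteq> 0 \<Longrightarrow> 0 < flow_in n f i j"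
    and e: "e \<in> G_edges n m" and nz: "routing_flow n m (\<lambda>i j. 0 < flow_right f i j) s e \<noteq> 0"
  shows "0 < f e"
proof -
  let ?goes_right = "\<lambda>i j. 0 < flow_right f i j"
  from e consider
      (right) i j where "1 \<le> i" "i \<le> n" "j < m" "e = (Node i j, Node i (Suc j))"
    | (down) i j where "1 \<le> i" "i \<le> n" "j \<le> m" "e = (Node i j, below n i j)"
    unfolding G_edges_iff[OF n] by blast
  then show ?thesis
  proof cases
    case right
    then show ?thesis
      using nz flow_right_routing_flow[OF right(1,2)] unfolding flow_right_def by (auto split: if_splits)
  next
    case down
    then have "\<not> ?goes_right i j" "throughput ?goes_right s i j \<noteq> 0"
      using nz flow_down_routing_flow[OF down(1-3)] unfolding flow_down_def by (auto split: if_splits)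
    then show ?thesis
      using outflow_pos_if_throughput_pos[OF n f fed down(1-3)] flow_right_nonneg[OF f down(1,2)] down(4)
      unfolding flow_down_def by fastforce
  qed
qed

definition unit_supply :: "nat \<times> nat \<Rightarrow> nat \<Rightarrow> nat \<Rightarrow> real" where
  "unit_supply p i j = (if (i, j) = p then 1 else 0)"

lemma unit_supply_nonneg: "0 \<le> unit_supply p i j"
  unfolding unit_supply_def by simp

definition edge_indicator :: "gvert \<times> gvert \<Rightarrow> gvert \<times> gvert \<Rightarrow> real" where
  "edge_indicator d e = (if e = d then 1 else 0)"

lemma flow_right_edge_indicator:
  "flow_right (edge_indicator (Node i0 j0, Node i0 (Suc j0))) i j = unit_supply (i0, j0) i j"
  "flow_right (edge_indicator (Node i0 j0, below n i0 j0)) i j = 0"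
  unfolding flow_right_def edge_indicator_def unit_supply_def below_def by auto

lemma flow_down_edge_indicator:
  "flow_down n (edge_indicator (Node i0 j0, Node i0 (Suc j0))) i j = 0"
  "flow_down n (edge_indicator (Node i0 j0, below n i0 j0)) i j = unit_supply (i0, j0) i j"
  unfolding flow_down_def edge_indicator_def unit_supply_def below_def by auto

lemma conserves_right_edge_indicator:
  "conserves n m (\<lambda>i j. unit_supply (i0, j0) i j - unit_supply (i0, Suc j0) i j)
     (edge_indicator (Node i0 j0, Node i0 (Suc j0)))"
proof -
  have "flow_in n (edge_indicator (Node i0 j0, Node i0 (Suc j0))) i j = unit_supply (i0, Suc j0) i j" for i j
    unfolding flow_in_def flow_right_edge_indicator flow_down_edge_indicator unit_supply_def by auto
  then show ?thesis
    unfolding conserves_def flow_right_edge_indicator flow_down_edge_indicator by simp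
qed

lemma conserves_down_edge_indicator:
  assumes "1 \<le> i0"
  shows "conserves n m (\<lambda>i j. unit_supply (i0, j0) i j - unit_supply (Suc i0, j0) i j)
     (edge_indicator (Node i0 j0, below n i0 j0))"
proof -
  have "flow_in n (edge_indicator (Node i0 j0, below n i0 j0)) i j = unit_supply (Suc i0, j0) i j" for i j
    using assms unfolding flow_in_def flow_right_edge_indicator flow_down_edge_indicator unit_supply_def by auto
  then show ?thesis
    unfolding conserves_def flow_right_edge_indicator flow_down_edge_indicator by simp
qed

lemma conserves_unit_paths:
  assumes "\<And>i j. goes_right i j \<Longrightarrow> j < m" and "1 \<le> i0"
  shows "conserves n m (unit_supply (i0, j0)) (\<lambda>e. edge_indicator (Node i0 j0, Node i0 (Suc j0)) e
      + routing_flow n m goes_right (unit_supply (i0, Suc j0)) e)"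
    and "conserves n m (unit_supply (i0, j0)) (\<lambda>e. edge_indicator (Node i0 j0, below n i0 j0) e
      + routing_flow n m goes_right (unit_supply (Suc i0, j0)) e)"
  using conserves_lincomb[OF conserves_right_edge_indicator[of n m i0 j0]
      conserves_routing_flow[where s="unit_supply (i0, Suc j0)", OF assms(1)], where c=1 and d=1]
    conserves_lincomb[OF conserves_down_edge_indicator[OF assms(2), of n m j0]
      conserves_routing_flow[where s="unit_supply (Suc i0, j0)", OF assms(1)], where c=1 and d=1]
  by simp_all

text \<open>At a node where \<open>f\<close> branches, route one unit from each of its two successors along
  the right turns of \<open>f\<close>: the two resulting paths to the sink, prefixed by the two out-edges,
  differ by a circulation inside the support of \<open>f\<close>.\<close>

lemma branching_node_circulation:
  assumes n: "1 \<le> n" and f: "f \<in> flow_polytope n m a" and ij: "1 \<le> i0" "i0 \<le> n" "j0 \<le> m"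
    and pos: "0 < flow_right f i0 j0" "0 < flow_down n f i0 j0"
  obtains \<phi> where "conserves n m (\<lambda>_ _. 0) \<phi>" "vanishes_off_edges n m \<phi>"
    "\<And>e. e \<in> G_edges n m \<Longrightarrow> f e = 0 \<Longrightarrow> \<phi> e = 0" "flow_right \<phi> i0 j0 = 1"
proof
  let ?goes_right = "\<lambda>i j. 0 < flow_right f i j"
  let ?right = "(Node i0 j0, Node i0 (Suc j0))" and ?down = "(Node i0 j0, below n i0 j0)"
  define p1 where "p1 = routing_flow n m ?goes_right (unit_supply (i0, Suc j0))"
  define p2 where "p2 = routing_flow n m ?goes_right (unit_supply (Suc i0, j0))"
  define \<phi> where "\<phi> = (\<lambda>e. (edge_indicator ?right e + p1 e) - (edge_indicator ?down e + p2 e))"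
  have goes_right_last: "j < m" if "?goes_right i j" for i j
    using that flow_right_last_column[of n m f j i] f unfolding flow_polytope_iff[OF n] by fastforce
  have fed1: "0 < flow_in n f i j" if "1 \<le> i" "i \<le> n" "j \<le> m" "unit_supply (i0, Suc j0) i j \<noteq> 0" for i j
    using that pos(1) flow_in_pos_iff[OF f that(1-3)] by (auto simp: unit_supply_def split: if_splits)
  have fed2: "0 < flow_in n f i j" if "1 \<le> i" "i \<le> n" "j \<le> m" "unit_supply (Suc i0, j0) i j \<noteq> 0" for i j
    using that pos(2) ij(1) flow_in_pos_iff[OF f that(1-3)] by (auto simp: unit_supply_def split: if_splits)
  note paths = conserves_unit_paths[where goes_right = ?goes_right, OF goes_right_last ij(1)]
  have "conserves n m (unit_supply (i0, j0)) (\<lambda>e. edge_indicator ?right e + p1 e)"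
    unfolding p1_def by (rule paths(1))
  moreover have "conserves n m (unit_supply (i0, j0)) (\<lambda>e. edge_indicator ?down e + p2 e)"
    unfolding p2_def by (rule paths(2))
  ultimately have "conserves n m (\<lambda>i j. 1 * unit_supply (i0, j0) i j + (- 1) * unit_supply (i0, j0) i j)
      (\<lambda>e. 1 * (edge_indicator ?right e + p1 e) + (- 1) * (edge_indicator ?down e + p2 e))"
    by (rule conserves_lincomb)
  then show "conserves n m (\<lambda>_ _. 0) \<phi>" unfolding \<phi>_def by (simp add: algebra_simps)
  have "?right \<in> G_edges n m" "?down \<in> G_edges n m"
    using ij goes_right_last[OF pos(1)] by (auto intro: right_edge_in_G_edges down_edge_in_G_edges)
  then show "vanishes_off_edges n m \<phi>"
    using vanishes_off_edges_routing_flow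
    unfolding vanishes_off_edges_def \<phi>_def p1_def p2_def edge_indicator_def by auto
  show "\<phi> e = 0" if "e \<in> G_edges n m" "f e = 0" for e
  proof -
    have "e \<noteq> ?right" "e \<noteq> ?down" using that pos unfolding flow_right_def flow_down_def by auto
    moreover have "p1 e = 0" "p2 e = 0"
      using routing_flow_support[where s="unit_supply (i0, Suc j0)", OF n f unit_supply_nonneg fed1 that(1)]
        routing_flow_support[where s="unit_supply (Suc i0, j0)", OF n f unit_supply_nonneg fed2 that(1)]
        that(2)
      unfolding p1_def p2_def by auto
    ultimately show ?thesis unfolding \<phi>_def edge_indicator_def by simp
  qed
  show "flow_right \<phi> i0 j0 = 1"
  proof -
    have "flow_right p1 i0 j0 = 0" "flow_right p2 i0 j0 = 0"
      unfolding p1_def p2_def flow_right_routing_flow[OF ij(1,2)]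
      by (simp_all add: throughput_eq_0 unit_supply_def)
    moreover have "?down \<noteq> ?right" by (simp add: below_def)
    ultimately show ?thesis unfolding \<phi>_def flow_right_def edge_indicator_def by simp
  qed
qed

lemma flow_polytope_perturbation:
  assumes n: "1 \<le> n" and f: "f \<in> flow_polytope n m a"
    and \<phi>: "conserves n m (\<lambda>_ _. 0) \<phi>" "vanishes_off_edges n m \<phi>"
      "\<And>e. e \<in> G_edges n m \<Longrightarrow> f e = 0 \<Longrightarrow> \<phi> e = 0"
  obtains d where "0 < d" "\<And>c. \<bar>c\<bar> \<le> d \<Longrightarrow> (\<lambda>e. f e + c * \<phi> e) \<in> flow_polytope n m a"
proof
  have fin: "finite (G_edges n m)" by (rule finite_G_edges[OF n])
  define K where "K = 1 + (\<Sum>e\<in>G_edges n m. \<bar>\<phi> e\<bar>)"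
  define \<mu> where "\<mu> = Min (insert 1 (f ` {e \<in> G_edges n m. 0 < f e}))"
  have "0 \<le> (\<Sum>e\<in>G_edges n m. \<bar>\<phi> e\<bar>)" by (simp add: sum_nonneg)
  then have K_pos: "0 < K" unfolding K_def by linarith
  have K_bound: "\<bar>\<phi> e\<bar> \<le> K" if "e \<in> G_edges n m" for e
  proof -
    have "\<bar>\<phi> e\<bar> \<le> (\<Sum>e\<in>G_edges n m. \<bar>\<phi> e\<bar>)"
      by (intro member_le_sum) (use fin that in auto)
    then show ?thesis unfolding K_def by linarith
  qed
  have \<mu>: "0 < \<mu>" "\<And>e. e \<in> G_edges n m \<Longrightarrow> 0 < f e \<Longrightarrow> \<mu> \<le> f e"
    unfolding \<mu>_def using fin by (simp_all add: Min_le)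
  show "0 < \<mu> / K" using K_pos \<mu> by simp
  fix c assume c: "\<bar>c\<bar> \<le> \<mu> / K"
  have "0 \<le> f e + c * \<phi> e" if e: "e \<in> G_edges n m" for e
  proof (cases "f e = 0")
    case False
    then have "0 < f e" using f e unfolding flow_polytope_def by force
    have "\<bar>c * \<phi> e\<bar> \<le> \<mu> / K * K"
      unfolding abs_mult using c K_bound[OF e] by (intro mult_mono) auto
    also have "\<dots> \<le> f e" using K_pos \<mu>(2)[OF e \<open>0 < f e\<close>] by simp
    finally show ?thesis by linarith
  qed (simp add: \<phi>(3)[OF e])
  moreover have "conserves n m (\<lambda>i j. 1 * node_supply a i j + c * 0) (\<lambda>e. 1 * f e + c * \<phi> e)"
    using f \<phi>(1) unfolding flow_polytope_iff[OF n] by (intro conserves_lincomb) auto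
  ultimately show "(\<lambda>e. f e + c * \<phi> e) \<in> flow_polytope n m a"
    using f \<phi>(2) unfolding flow_polytope_iff[OF n] vanishes_off_edges_def by simp
qed

lemma is_vertex_perturbation:
  assumes "is_vertex P f" "(\<lambda>e. f e + d * \<phi> e) \<in> P" "(\<lambda>e. f e + (- d) * \<phi> e) \<in> P" "d \<noteq> 0"
  shows "\<phi> = (\<lambda>_. 0)"
proof -
  have half: "0 < (1 / 2 :: real) \<and> (1 / 2 :: real) < 1 \<and>
      f = (\<lambda>e. (1 - 1 / 2) * (f e + d * \<phi> e) + 1 / 2 * (f e + (- d) * \<phi> e))"
    by (simp add: algebra_simps)
  have "\<forall>g\<in>P. \<forall>h\<in>P. \<forall>t::real. 0 < t \<and> t < 1 \<and> f = (\<lambda>e. (1 - t) * g e + t * h e) \<longrightarrow> g = h"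
    using assms(1) unfolding is_vertex_def by blast
  from this[rule_format, OF assms(2,3) half]
  have eq: "(\<lambda>e. f e + d * \<phi> e) = (\<lambda>e. f e + (- d) * \<phi> e)" .
  have "\<phi> e = 0" for e
    using fun_cong[OF eq, of e] assms(4) by simp
  then show ?thesis by auto
qed

lemma vertex_branchless:
  assumes n: "1 \<le> n" and v: "is_vertex (flow_polytope n m a) f"
  shows "branchless n m f"
proof (rule ccontr)
  assume "\<not> branchless n m f"
  then obtain i0 j0 where ij: "1 \<le> i0" "i0 \<le> n" "j0 \<le> m"
    and nz: "flow_right f i0 j0 \<noteq> 0" "flow_down n f i0 j0 \<noteq> 0"
    unfolding branchless_def by blast
  have f: "f \<in> flow_polytope n m a" using v unfolding is_vertex_def by blast
  have "0 < flow_right f i0 j0" using flow_right_nonneg[OF f ij(1,2), of j0] nz(1) by linarith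
  moreover have "0 < flow_down n f i0 j0" using flow_down_nonneg[OF f ij] nz(2) by linarith
  ultimately obtain \<phi> where \<phi>: "conserves n m (\<lambda>_ _. 0) \<phi>" "vanishes_off_edges n m \<phi>"
      "\<And>e. e \<in> G_edges n m \<Longrightarrow> f e = 0 \<Longrightarrow> \<phi> e = 0" and one: "flow_right \<phi> i0 j0 = 1"
    using branching_node_circulation[OF n f ij] by blast
  obtain d where d: "0 < d" "\<And>c. \<bar>c\<bar> \<le> d \<Longrightarrow> (\<lambda>e. f e + c * \<phi> e) \<in> flow_polytope n m a"
    using flow_polytope_perturbation[OF n f \<phi>] by blast
  have "(\<lambda>e. f e + d * \<phi> e) \<in> flow_polytope n m a" "(\<lambda>e. f e + (- d) * \<phi> e) \<in> flow_polytope n m a"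
    using d(1) d(2)[of d] d(2)[of "- d"] by simp_all
  then have "\<phi> = (\<lambda>_. 0)"
    using is_vertex_perturbation[OF v] d(1) by simp
  with one show False unfolding flow_right_def by simp
qed

theorem is_vertex_flow_polytope_iff:
  assumes "1 \<le> n"
  shows "is_vertex (flow_polytope n m a) f \<longleftrightarrow> f \<in> flow_polytope n m a \<and> branchless n m f"
proof
  assume v: "is_vertex (flow_polytope n m a) f"
  then show "f \<in> flow_polytope n m a \<and> branchless n m f"
    using vertex_branchless[OF assms v] unfolding is_vertex_def by simp
qed (use branchless_is_vertex[OF assms] in blast)

section \<open>Vertices as walks in the digraph of \<open>A\<^sub>n\<close>\<close>

fun is_walk :: "nat \<Rightarrow> nat \<Rightarrow> nat list \<Rightarrow> bool" where
  "is_walk n r [] = True"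
| "is_walk n r (c # ws) \<longleftrightarrow> c < 2 ^ n \<and> A_mat n $$ (r, c) = 1 \<and> is_walk n c ws"

definition walks :: "nat \<Rightarrow> nat \<Rightarrow> nat \<Rightarrow> nat list set" where
  "walks n m r = {ws. length ws = m \<and> is_walk n r ws}"

lemma is_walk_iff_nth:
  "is_walk n r ws \<longleftrightarrow> (\<forall>k < length ws. ws ! k < 2 ^ n \<and> A_mat n $$ ((r # ws) ! k, ws ! k) = 1)"
proof (induction ws arbitrary: r)
  case (Cons c ws)
  have "(\<forall>k < length (c # ws). P k) \<longleftrightarrow> P 0 \<and> (\<forall>k < length ws. P (Suc k))" for P
    by (auto simp: less_Suc_eq_0_disj)
  then show ?case using Cons.IH[of c] by simp
qed simp

lemma walk_step_routable:
  assumes "ws \<in> walks n m r" "r < 2 ^ n" "k < m"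
  shows "routable n (bitvec ((r # ws) ! k)) (bitvec (ws ! k))"
proof -
  have "ws ! k < 2 ^ n" "A_mat n $$ ((r # ws) ! k, ws ! k) = 1" "(r # ws) ! k < 2 ^ n"
    using assms unfolding walks_def is_walk_iff_nth by (auto simp: nth_Cons split: nat.split)
  then show ?thesis using A_mat_entry by (simp split: if_splits)
qed

lemma finite_walks: "finite (walks n m r)"
proof (rule finite_subset)
  show "walks n m r \<subseteq> {ws. set ws \<subseteq> {..<2 ^ n} \<and> length ws = m}"
    unfolding walks_def is_walk_iff_nth by (auto simp: in_set_conv_nth)
qed (simp add: finite_lists_length_eq)

lemma walks_0: "walks n 0 r = {[]}"
  unfolding walks_def by auto

lemma card_walks_Suc:
  "card (walks n (Suc m) r) = (\<Sum>c<2 ^ n. if A_mat n $$ (r, c) = 1 then card (walks n m c) else 0)"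
proof -
  have "walks n (Suc m) r = (\<Union>c\<in>{c \<in> {..<2 ^ n}. A_mat n $$ (r, c) = 1}. Cons c ` walks n m c)"
    unfolding walks_def by (auto simp: length_Suc_conv)
  then have "card (walks n (Suc m) r) = (\<Sum>c\<in>{c \<in> {..<2 ^ n}. A_mat n $$ (r, c) = 1}. card (Cons c ` walks n m c))"
    by (simp only:) (rule card_UN_disjoint, auto simp: finite_walks)
  also have "\<dots> = (\<Sum>c\<in>{c \<in> {..<2 ^ n}. A_mat n $$ (r, c) = 1}. card (walks n m c))"
    by (intro sum.cong refl card_image) simp
  also have "\<dots> = (\<Sum>c<2 ^ n. if A_mat n $$ (r, c) = 1 then card (walks n m c) else 0)"
    by (rule sum.inter_filter) simp
  finally show ?thesis .
qed

definition exit_rows :: "(gvert \<times> gvert \<Rightarrow> real) \<Rightarrow> nat \<Rightarrow> nat \<Rightarrow> nat" where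
  "exit_rows f k i = (if 0 < flow_right f i k then 1 else 0)"

definition entry_rows :: "(nat \<Rightarrow> nat) \<Rightarrow> (gvert \<times> gvert \<Rightarrow> real) \<Rightarrow> nat \<Rightarrow> nat \<Rightarrow> nat" where
  "entry_rows a f k = (if k = 0 then chi a else exit_rows f (k - 1))"

definition exit_pattern :: "nat \<Rightarrow> nat \<Rightarrow> (gvert \<times> gvert \<Rightarrow> real) \<Rightarrow> nat list" where
  "exit_pattern n m f = map (\<lambda>k. ind n (exit_rows f k)) [0..<m]"

lemma zero_one_exit_rows: "zero_one n (exit_rows f k)"
  unfolding zero_one_def exit_rows_def by auto

lemma outflow_pos_iff:
  assumes "1 \<le> n" "f \<in> flow_polytope n m a" "1 \<le> i" "i \<le> n" "j \<le> m"
  shows "0 < flow_right f i j + flow_down n f i j \<longleftrightarrow> (j = 0 \<and> chi a i \<noteq> 0) \<or> 0 < flow_in n f i j"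
  using flow_polytope_conserves[OF assms] flow_in_nonneg[OF assms(2-5)]
  unfolding node_supply_def chi_def by auto

lemma flow_down_pos_iff:
  assumes "f \<in> flow_polytope n m a" "branchless n m f" "1 \<le> i" "i \<le> n" "j \<le> m"
  shows "0 < flow_down n f i j \<longleftrightarrow> 0 < flow_right f i j + flow_down n f i j \<and> \<not> 0 < flow_right f i j"
  using assms flow_right_nonneg[OF assms(1,3,4), of j] flow_down_nonneg[OF assms(1,3-5)]
  unfolding branchless_def by force

lemma carries_iff_outflow_pos:
  assumes n: "1 \<le> n" and f: "f \<in> flow_polytope n m a" "branchless n m f" and k: "k \<le> m"
  shows "1 \<le> i \<Longrightarrow> i \<le> n \<Longrightarrow>
    carries (entry_rows a f k) (exit_rows f k) i \<longleftrightarrow> 0 < flow_right f i k + flow_down n f i k"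
proof (induction i)
  case (Suc i)
  have "entry_rows a f k (Suc i) \<noteq> 0 \<longleftrightarrow>
      (k = 0 \<and> chi a (Suc i) \<noteq> 0) \<or> (0 < k \<and> 0 < flow_right f (Suc i) (k - 1))"
    by (auto simp: entry_rows_def exit_rows_def)
  moreover have "carries (entry_rows a f k) (exit_rows f k) i \<and> exit_rows f k i = 0 \<longleftrightarrow>
      1 \<le> i \<and> 0 < flow_right f i k + flow_down n f i k \<and> \<not> 0 < flow_right f i k"
    using Suc by (cases "i = 0") (simp_all add: exit_rows_def[of f k i])
  ultimately have "carries (entry_rows a f k) (exit_rows f k) (Suc i) \<longleftrightarrow>
      (k = 0 \<and> chi a (Suc i) \<noteq> 0) \<or> (0 < k \<and> 0 < flow_right f (Suc i) (k - 1)) \<or>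
      (1 \<le> i \<and> 0 < flow_right f i k + flow_down n f i k \<and> \<not> 0 < flow_right f i k)"
    by simp
  also have "\<dots> \<longleftrightarrow> 0 < flow_right f (Suc i) k + flow_down n f (Suc i) k"
    using outflow_pos_iff[OF n f(1) Suc.prems k] flow_in_pos_iff[OF f(1) Suc.prems k]
      flow_down_pos_iff[OF f, of i k] Suc.prems k by auto
  finally show ?case .
qed simp

lemma routable_exit_rows:
  assumes n: "1 \<le> n" and f: "f \<in> flow_polytope n m a" "branchless n m f" and k: "k \<le> m"
  shows "routable n (entry_rows a f k) (exit_rows f k)"
  unfolding routable_def
proof (intro ballI impI)
  fix i assume i: "i \<in> {1..n}" and "exit_rows f k i \<noteq> 0"
  then have "0 < flow_right f i k" unfolding exit_rows_def by (auto split: if_splits)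
  moreover have "0 \<le> flow_down n f i k" using flow_down_nonneg[OF f(1)] i k by auto
  ultimately show "carries (entry_rows a f k) (exit_rows f k) i"
    using carries_iff_outflow_pos[OF n f k] i by auto
qed

lemma exit_pattern_in_walks:
  assumes n: "1 \<le> n" and f: "f \<in> flow_polytope n m a" "branchless n m f"
  shows "exit_pattern n m f \<in> walks n m (ind n (chi a))"
proof -
  let ?ws = "exit_pattern n m f" and ?r = "ind n (chi a)"
  have "?ws ! k < 2 ^ n \<and> A_mat n $$ ((?r # ?ws) ! k, ?ws ! k) = 1" if k: "k < m" for k
  proof -
    have ws_k: "?ws ! k = ind n (exit_rows f k)" using k unfolding exit_pattern_def by simp
    have prev: "(?r # ?ws) ! k = ind n (entry_rows a f k)"
      using k unfolding exit_pattern_def entry_rows_def by (auto simp: nth_Cons split: nat.split)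
    have "routable n (bitvec ((?r # ?ws) ! k)) (bitvec (?ws ! k))"
      using routable_exit_rows[OF n f, of k] k unfolding prev ws_k
      by (subst routable_cong[OF bitvec_ind bitvec_ind]) (auto simp: entry_rows_def zero_one_chi zero_one_exit_rows)
    moreover have "(?r # ?ws) ! k < 2 ^ n" "?ws ! k < 2 ^ n"
      unfolding prev ws_k entry_rows_def by (auto intro: ind_less zero_one_chi zero_one_exit_rows)
    ultimately show ?thesis by (simp add: A_mat_entry)
  qed
  then show ?thesis
    unfolding walks_def is_walk_iff_nth by (simp add: exit_pattern_def)
qed

lemma flow_right_pos_iff_if_exit_pattern_eq:
  assumes "exit_pattern n m f = exit_pattern n m g" "1 \<le> i" "i \<le> n" "k < m"
  shows "0 < flow_right f i k \<longleftrightarrow> 0 < flow_right g i k"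
proof -
  have "ind n (exit_rows f k) = ind n (exit_rows g k)"
    using arg_cong[OF assms(1), of "\<lambda>ws. ws ! k"] assms(4) unfolding exit_pattern_def by simp
  then have "exit_rows f k i = exit_rows g k i"
    using bitvec_ind[of n "exit_rows f k" i] bitvec_ind[of n "exit_rows g k" i] zero_one_exit_rows assms(2,3)
    by auto
  then show ?thesis unfolding exit_rows_def by (auto split: if_splits)
qed

lemma inj_on_exit_pattern:
  assumes n: "1 \<le> n"
  shows "inj_on (exit_pattern n m) {f. is_vertex (flow_polytope n m a) f}"
proof (rule inj_onI)
  fix f g
  assume "f \<in> {f. is_vertex (flow_polytope n m a) f}" "g \<in> {f. is_vertex (flow_polytope n m a) f}"
  then have f: "f \<in> flow_polytope n m a" "branchless n m f" and g: "g \<in> flow_polytope n m a" "branchless n m g"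
    using is_vertex_flow_polytope_iff[OF n] by auto
  assume "exit_pattern n m f = exit_pattern n m g"
  note same = flow_right_pos_iff_if_exit_pattern_eq[OF this]
  show "f = g"
  proof (rule flow_polytope_eqI[OF n f(1) g(1)])
    fix i j assume ij: "1 \<le> i" "i \<le> n" "j \<le> m"
    have branch: "flow_right f i j = 0 \<or> flow_down n f i j = 0" "flow_right g i j = 0 \<or> flow_down n g i j = 0"
      using f(2) g(2) ij unfolding branchless_def by auto
    show "(flow_right f i j = 0 \<and> flow_right g i j = 0) \<or> (flow_down n f i j = 0 \<and> flow_down n g i j = 0)"
    proof (cases "j < m")
      case j: True
      show ?thesis
      proof (cases "0 < flow_right f i j")
        case True
        then show ?thesis
          using same[OF ij(1,2) j] branch by auto
      next
        case False
        then show ?thesis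
          using same[OF ij(1,2) j] flow_right_nonneg[OF f(1) ij(1,2), of j]
            flow_right_nonneg[OF g(1) ij(1,2), of j] by auto
      qed
    next
      case False
      then show ?thesis
        using flow_right_last_column f(1) g(1) unfolding flow_polytope_iff[OF n] by auto
    qed
  qed
qed

lemma throughput_pos_iff_carries:
  assumes ws: "ws \<in> walks n m (ind n (chi a))"
  defines "goes_right \<equiv> \<lambda>i k. k < m \<and> bitvec (ws ! k) i \<noteq> 0"
  shows "k < m \<Longrightarrow> 1 \<le> i \<Longrightarrow> i \<le> n \<Longrightarrow> 0 < throughput goes_right (node_supply a) i k
    \<longleftrightarrow> carries (bitvec ((ind n (chi a) # ws) ! k)) (bitvec (ws ! k)) i"
proof (induction k arbitrary: i rule: less_induct)
  case (less k)
  let ?u = "bitvec ((ind n (chi a) # ws) ! k)" and ?w = "bitvec (ws ! k)"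
  have r: "ind n (chi a) < 2 ^ n" by (rule ind_less[OF zero_one_chi])
  have left: "0 < throughput goes_right (node_supply a) i' (k - 1)"
    if "0 < k" "goes_right i' (k - 1)" "1 \<le> i'" "i' \<le> n" for i'
    using walk_step_routable[OF ws r, of "k - 1"] less.IH[of "k - 1" i'] that less.prems(1)
    unfolding routable_def goes_right_def by (simp add: nth_Cons')
  have entry: "?u i' \<noteq> 0 \<longleftrightarrow> 0 < node_supply a i' k \<or> (0 < k \<and> goes_right i' (k - 1))"
    if "1 \<le> i'" "i' \<le> n" for i'
    using bitvec_ind[of n "chi a" i', OF zero_one_chi] that less.prems(1)
    unfolding goes_right_def node_supply_def chi_def by (auto simp: nth_Cons')
  show ?case using less.prems(2,3)
  proof (induction i)
    case (Suc i)
    have "0 < throughput goes_right (node_supply a) (Suc i) k \<longleftrightarrow>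
        ?u (Suc i) \<noteq> 0 \<or> (1 \<le> i \<and> ?w i = 0 \<and> 0 < throughput goes_right (node_supply a) i k)"
      using throughput_pos_iff[where s="node_supply a" and goes_right=goes_right and i="Suc i" and j=k,
          OF node_supply_nonneg] entry[OF Suc.prems]
        left[of "Suc i"] Suc.prems less.prems(1) unfolding goes_right_def by auto
    also have "\<dots> \<longleftrightarrow> carries ?u ?w (Suc i)"
      using Suc by (cases "i = 0") auto
    finally show ?case .
  qed simp
qed

lemma exit_pattern_surj:
  assumes n: "1 \<le> n" and ws: "ws \<in> walks n m (ind n (chi a))"
  obtains f where "is_vertex (flow_polytope n m a) f" "exit_pattern n m f = ws"
proof
  define goes_right where "goes_right = (\<lambda>i k. k < m \<and> bitvec (ws ! k) i \<noteq> 0)"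
  define f where "f = routing_flow n m goes_right (node_supply a)"
  have "f \<in> flow_polytope n m a"
    unfolding flow_polytope_iff[OF n] f_def
    using vanishes_off_edges_routing_flow routing_flow_nonneg[where s="node_supply a", OF node_supply_nonneg]
    by (auto intro: conserves_routing_flow simp: goes_right_def)
  then show "is_vertex (flow_polytope n m a) f"
    unfolding is_vertex_flow_polytope_iff[OF n] f_def by (simp add: branchless_routing_flow)
  have len: "length ws = m" and r: "ind n (chi a) < 2 ^ n"
    using ws ind_less[OF zero_one_chi] unfolding walks_def by auto
  have "ind n (exit_rows f k) = ws ! k" if k: "k < m" for k
  proof -
    have "exit_rows f k i = bitvec (ws ! k) i" if i: "i \<in> {1..n}" for i
    proof -
      have "goes_right i k \<Longrightarrow> 0 < throughput goes_right (node_supply a) i k"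
        using walk_step_routable[OF ws r k] throughput_pos_iff_carries[OF ws, of k i] k i
        unfolding routable_def goes_right_def by auto
      then have "0 < flow_right f i k \<longleftrightarrow> goes_right i k"
        using flow_right_routing_flow[of i n m goes_right "node_supply a" k] i k unfolding f_def by auto
      then show ?thesis unfolding exit_rows_def goes_right_def bitvec_def using k by auto
    qed
    then have "ind n (exit_rows f k) = ind n (bitvec (ws ! k))" by (rule ind_cong)
    also have "\<dots> = ws ! k"
      using ws k unfolding walks_def is_walk_iff_nth by (simp add: ind_bitvec)
    finally show ?thesis .
  qed
  then show "exit_pattern n m f = ws"
    using len by (intro nth_equalityI) (auto simp: exit_pattern_def)
qed

theorem num_vertices_eq_card_walks:
  assumes n: "1 \<le> n"
  shows "num_vertices n m a = card (walks n m (ind n (chi a)))"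
proof (cases "m = 0")
  case True
  then show ?thesis by (simp add: num_vertices_def walks_0)
next
  case False
  have "exit_pattern n m ` {f. is_vertex (flow_polytope n m a) f} = walks n m (ind n (chi a))"
  proof
    show "exit_pattern n m ` {f. is_vertex (flow_polytope n m a) f} \<subseteq> walks n m (ind n (chi a))"
      using exit_pattern_in_walks[OF n] is_vertex_flow_polytope_iff[OF n] by blast
    show "walks n m (ind n (chi a)) \<subseteq> exit_pattern n m ` {f. is_vertex (flow_polytope n m a) f}"
    proof
      fix ws assume "ws \<in> walks n m (ind n (chi a))"
      then obtain f where "is_vertex (flow_polytope n m a) f" "exit_pattern n m f = ws"
        by (rule exit_pattern_surj[OF n])
      then show "ws \<in> exit_pattern n m ` {f. is_vertex (flow_polytope n m a) f}" by blast
    qed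
  qed
  then have "bij_betw (exit_pattern n m) {f. is_vertex (flow_polytope n m a) f} (walks n m (ind n (chi a)))"
    using inj_on_exit_pattern[OF n] unfolding bij_betw_def by blast
  then show ?thesis
    using False unfolding num_vertices_def by (simp add: bij_betw_same_card)
qed

section \<open>The determinant of \<open>I - x A\<^sub>n\<close>\<close>

lemma dim_A_mat [simp]: "dim_row (A_mat n) = 2 ^ n" "dim_col (A_mat n) = 2 ^ n"
  unfolding A_mat_def by simp_all

lemma IxA_carrier: "IxA n \<in> carrier_mat (2 ^ n) (2 ^ n)"
  unfolding IxA_def carrier_mat_def by simp

lemma IxA_entry:
  assumes "i < 2 ^ n" "j < 2 ^ n"
  shows "IxA n $$ (i, j) = (if i = j then 1 else 0) - [:0, 1:] * [:real_of_int (A_mat n $$ (i, j)):]"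
  unfolding IxA_def using assms by simp

definition partial_sum_weight :: "nat \<Rightarrow> nat \<Rightarrow> nat" where
  "partial_sum_weight n r = (\<Sum>l=1..n. \<Sum>k=1..l. bitvec r k)"

lemma eq_if_partial_sums_eq:
  fixes u v :: "nat \<Rightarrow> nat"
  assumes "\<And>l. l \<in> {1..n} \<Longrightarrow> (\<Sum>k=1..l. u k) = (\<Sum>k=1..l. v k)" and "k \<in> {1..n}"
  shows "u k = v k"
proof -
  obtain l where l: "k = Suc l" using assms(2) by (cases k) auto
  have "(\<Sum>k=1..l. u k) = (\<Sum>k=1..l. v k)"
  proof (cases "l = 0")
    case False
    then show ?thesis using assms(1)[of l] assms(2) l by simp
  qed simp
  moreover have "(\<Sum>k=1..Suc l. u k) = (\<Sum>k=1..Suc l. v k)"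
    using assms(1)[of k] assms(2) l by simp
  ultimately show ?thesis using l by simp
qed

lemma dominates_weight_le:
  "dominates n (bitvec r) (bitvec c) \<Longrightarrow> partial_sum_weight n c \<le> partial_sum_weight n r"
  unfolding partial_sum_weight_def dominates_def by (rule sum_mono) blast

lemma dominates_weight_eq_imp_eq:
  assumes "r < 2 ^ n" "c < 2 ^ n" "dominates n (bitvec r) (bitvec c)"
    and "partial_sum_weight n c = partial_sum_weight n r"
  shows "r = c"
proof -
  have "(\<Sum>k=1..l. bitvec c k) = (\<Sum>k=1..l. bitvec r k)" if "l \<in> {1..n}" for l
  proof (rule sum_mono_inv[of "\<lambda>l. \<Sum>k=1..l. bitvec c k" "{1..n}"])
    show "(\<Sum>l=1..n. \<Sum>k=1..l. bitvec c k) = (\<Sum>l=1..n. \<Sum>k=1..l. bitvec r k)"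
      using assms(4) unfolding partial_sum_weight_def .
    show "(\<Sum>k=1..i. bitvec c k) \<le> (\<Sum>k=1..i. bitvec r k)" if "i \<in> {1..n}" for i
      using assms(3) that unfolding dominates_def by blast
  qed (use that in auto)
  then have "bitvec c k = bitvec r k" if "k \<in> {1..n}" for k
    using eq_if_partial_sums_eq that by blast
  then have "ind n (bitvec c) = ind n (bitvec r)"
    by (rule ind_cong)
  then show ?thesis using ind_bitvec assms(1,2) by metis
qed

text \<open>Since \<open>A\<^sub>n\<close> only relates dominating vectors, the weight does not increase along a
  permutation supported on the nonzero entries of \<open>A\<^sub>n\<close>; as the total weight is preserved, such
  a permutation fixes every weight and hence is the identity.\<close>

lemma permutation_in_support_A_mat_eq_id:
  assumes p: "p permutes {0..<2 ^ n}"
    and supp: "\<And>i. i < 2 ^ n \<Longrightarrow> A_mat n $$ (i, p i) \<noteq> 0"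
  shows "p = id"
proof -
  have p_less: "p i < 2 ^ n" if "i < 2 ^ n" for i
    using p that permutes_in_image by fastforce
  have dom: "dominates n (bitvec i) (bitvec (p i))" if "i < 2 ^ n" for i
    using A_mat_nonzero_dominates[OF that p_less[OF that] supp[OF that]] .
  have le: "partial_sum_weight n (p i) \<le> partial_sum_weight n i" if "i \<in> {0..<2 ^ n}" for i
    using dom that by (simp add: dominates_weight_le)
  have sums: "(\<Sum>i\<in>{0..<2 ^ n}. partial_sum_weight n (p i)) = (\<Sum>i\<in>{0..<2 ^ n}. partial_sum_weight n i)"
    using sum.permute[OF p, of "partial_sum_weight n"] by (simp add: comp_def)
  have "p i = i" if "i < 2 ^ n" for i
  proof -
    have "partial_sum_weight n (p i) = partial_sum_weight n i"
      by (rule sum_mono_inv[OF sums le]) (use that in auto)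
    then show ?thesis using dominates_weight_eq_imp_eq[OF that p_less[OF that] dom[OF that]] by simp
  qed
  moreover have "p i = i" if "\<not> i < 2 ^ n" for i
    using permutes_not_in[OF p] that by simp
  ultimately show ?thesis by (metis eq_id_iff)
qed

theorem det_IxA: "det (IxA n) = [:1, -1:] ^ (2 ^ n)"
proof -
  let ?N = "2 ^ n :: nat" and ?M = "IxA n"
  let ?S = "{p. p permutes {0..<?N}}"
  let ?term = "\<lambda>p. signof p * (\<Prod>i = 0..<?N. ?M $$ (i, p i))"
  have vanish: "?term p = 0" if "p \<in> ?S - {id}" for p
  proof -
    have p: "p permutes {0..<?N}" "p \<noteq> id" using that by auto
    then obtain i where i: "i < ?N" "A_mat n $$ (i, p i) = 0"
      using permutation_in_support_A_mat_eq_id by blast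
    have "p i \<noteq> i" using i A_mat_diag by auto
    moreover have "p i < ?N" using p(1) i(1) permutes_in_image by fastforce
    ultimately have "?M $$ (i, p i) = 0" using IxA_entry[OF i(1)] i(2) by simp
    then have "(\<Prod>i = 0..<?N. ?M $$ (i, p i)) = 0" using i(1) by (intro prod_zero) auto
    then show ?thesis by simp
  qed
  have "det ?M = ?term id + sum ?term (?S - {id})"
    unfolding det_def'[OF IxA_carrier] by (rule sum.remove) (simp_all add: finite_permutations permutes_id)
  also have "sum ?term (?S - {id}) = 0"
    using vanish by (intro sum.neutral) blast
  also have "?term id = (\<Prod>i = 0..<?N. [:1, -1:])"
    using IxA_entry A_mat_diag by (simp add: one_pCons)
  finally show ?thesis by simp
qed

section \<open>The generating function of walks\<close>

lemma det_mult_nth_eq_cofactor_sum: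
  fixes M :: "'a :: comm_ring_1 mat"
  assumes M: "M \<in> carrier_mat N N" and v: "v \<in> carrier_vec N"
    and Mv: "M *\<^sub>v v = vec N (\<lambda>_. 1)" and c: "c < N"
  shows "det M * v $ c = (\<Sum>j<N. cofactor M j c)"
proof -
  have "(det M \<cdot>\<^sub>m 1\<^sub>m N) *\<^sub>v v = adj_mat M *\<^sub>v vec N (\<lambda>_. 1)"
    unfolding Mv[symmetric] adj_mat(3)[OF M, symmetric]
    using adj_mat(1)[OF M] M v by (simp add: assoc_mult_mat_vec)
  then have "((det M \<cdot>\<^sub>m 1\<^sub>m N) *\<^sub>v v) $ c = (adj_mat M *\<^sub>v vec N (\<lambda>_. 1)) $ c" by simp
  moreover have "((det M \<cdot>\<^sub>m 1\<^sub>m N) *\<^sub>v v) $ c = det M * v $ c"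
    using v c by simp
  moreover have "(adj_mat M *\<^sub>v vec N (\<lambda>_. 1)) $ c = (\<Sum>j<N. cofactor M j c)"
    using M c unfolding adj_mat_def by (simp add: scalar_prod_def lessThan_atLeast0)
  ultimately show ?thesis by simp
qed

lemma det_map_fps_of_poly: "det (map_mat fps_of_poly (B :: real poly mat)) = fps_of_poly (det B)"
proof -
  have "comm_ring_hom (fps_of_poly :: real poly \<Rightarrow> real fps)"
    by unfold_locales (simp_all add: fps_of_poly_add fps_of_poly_mult)
  then show ?thesis by (rule comm_ring_hom.hom_det)
qed

lemma mat_delete_map_mat: "mat_delete (map_mat f A) i j = map_mat f (mat_delete A i j)"
  unfolding mat_delete_def by (rule eq_matI) auto

definition walk_gf :: "nat \<Rightarrow> nat \<Rightarrow> real fps" where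
  "walk_gf n r = Abs_fps (\<lambda>m. real (card (walks n m r)))"

lemma walk_gf_rec:
  assumes r: "r < 2 ^ n"
  shows "walk_gf n r = 1 + fps_X * (\<Sum>c<2 ^ n. fps_const (real_of_int (A_mat n $$ (r, c))) * walk_gf n c)"
proof (rule fps_ext)
  fix m
  show "fps_nth (walk_gf n r) m =
      fps_nth (1 + fps_X * (\<Sum>c<2 ^ n. fps_const (real_of_int (A_mat n $$ (r, c))) * walk_gf n c)) m"
  proof (cases m)
    case (Suc k)
    have "real (card (walks n (Suc k) r)) =
        (\<Sum>c<2 ^ n. real (if A_mat n $$ (r, c) = 1 then card (walks n k c) else 0))"
      unfolding card_walks_Suc by simp
    also have "\<dots> = (\<Sum>c<2 ^ n. real_of_int (A_mat n $$ (r, c)) * real (card (walks n k c)))"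
      using A_mat_entry[OF r] by (intro sum.cong refl) auto
    finally show ?thesis using Suc by (simp add: walk_gf_def fps_sum_nth)
  qed (simp add: walk_gf_def walks_0)
qed

lemma map_IxA_entry:
  assumes "i < 2 ^ n" "j < 2 ^ n"
  shows "map_mat fps_of_poly (IxA n) $$ (i, j) =
    (if i = j then 1 else 0) - fps_X * fps_const (real_of_int (A_mat n $$ (i, j)))"
  using assms IxA_carrier[of n]
  by (simp add: IxA_entry fps_of_poly_diff fps_of_poly_mult fps_of_poly_const)

lemma IxA_mult_walk_gf:
  "map_mat fps_of_poly (IxA n) *\<^sub>v vec (2 ^ n) (walk_gf n) = vec (2 ^ n) (\<lambda>_. 1)"
proof (rule eq_vecI)
  fix i assume "i < dim_vec (vec (2 ^ n) (\<lambda>_. 1 :: real fps))"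
  then have i: "i < 2 ^ n" by simp
  have "(map_mat fps_of_poly (IxA n) *\<^sub>v vec (2 ^ n) (walk_gf n)) $ i =
      (\<Sum>j<2 ^ n. map_mat fps_of_poly (IxA n) $$ (i, j) * walk_gf n j)"
    using IxA_carrier[of n] i by (auto simp: scalar_prod_def lessThan_atLeast0 intro!: sum.cong)
  also have "\<dots> = (\<Sum>j<2 ^ n. (if i = j then walk_gf n j else 0)
      - fps_X * (fps_const (real_of_int (A_mat n $$ (i, j))) * walk_gf n j))"
    using i by (intro sum.cong refl) (simp add: map_IxA_entry algebra_simps)
  also have "\<dots> = walk_gf n i - fps_X * (\<Sum>j<2 ^ n. fps_const (real_of_int (A_mat n $$ (i, j))) * walk_gf n j)"
    using i by (simp add: sum_subtractf sum_distrib_left)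
  also have "\<dots> = 1" using walk_gf_rec[OF i] by simp
  finally show "(map_mat fps_of_poly (IxA n) *\<^sub>v vec (2 ^ n) (walk_gf n)) $ i = vec (2 ^ n) (\<lambda>_. 1) $ i"
    using i by simp
qed (use IxA_carrier[of n] in simp)

text \<open>Cramer's rule for the system \<open>(I - x A\<^sub>n) v = 1\<close> satisfied by the generating functions.\<close>

theorem walk_gf_cofactor_sum:
  assumes c: "c < 2 ^ n"
  shows "(1 - fps_X) ^ (2 ^ n) * walk_gf n c =
    fps_of_poly (\<Sum>j<2 ^ n. (-1) ^ (c + j) * det (mat_delete (IxA n) j c))"
proof -
  let ?M = "map_mat fps_of_poly (IxA n)"
  have M: "?M \<in> carrier_mat (2 ^ n) (2 ^ n)" using IxA_carrier by simp
  have "fps_of_poly [:1, -1:] = (1 - fps_X :: real fps)"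
    by (simp add: fps_of_poly_linear')
  then have det: "det ?M = (1 - fps_X) ^ (2 ^ n)"
    unfolding det_map_fps_of_poly det_IxA fps_of_poly_power by simp
  have cofactor: "cofactor ?M j c = fps_of_poly ((-1) ^ (c + j) * det (mat_delete (IxA n) j c))" for j
    unfolding cofactor_def mat_delete_map_mat det_map_fps_of_poly
    by (simp add: fps_of_poly_mult fps_of_poly_power fps_of_poly_uminus add.commute)
  have "det ?M * walk_gf n c = (\<Sum>j<2 ^ n. cofactor ?M j c)"
    using det_mult_nth_eq_cofactor_sum[OF M _ IxA_mult_walk_gf c] c by simp
  then show ?thesis unfolding det cofactor fps_of_poly_sum .
qed

lemma degree_det_le:
  fixes B :: "'a :: comm_ring_1 poly mat"
  assumes B: "B \<in> carrier_mat N N" and entries: "\<And>i j. i < N \<Longrightarrow> j < N \<Longrightarrow> degree (B $$ (i, j)) \<le> 1"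
  shows "degree (det B) \<le> N"
  unfolding det_def'[OF B]
proof (rule degree_sum_le)
  fix p assume "p \<in> {p. p permutes {0..<N}}"
  then have "p i < N" if "i < N" for i
    using that permutes_in_image by fastforce
  then have "degree (\<Prod>i = 0..<N. B $$ (i, p i)) \<le> (\<Sum>i = 0..<N. 1)"
    using entries by (intro order.trans[OF degree_prod_sum_le] sum_mono) auto
  then show "degree (signof p * (\<Prod>i = 0..<N. B $$ (i, p i))) \<le> N"
    using degree_mult_le[of "signof p" "\<Prod>i = 0..<N. B $$ (i, p i)"] by simp
qed (simp add: finite_permutations)

lemma degree_IxA_entry:
  assumes "i < 2 ^ n" "j < 2 ^ n"
  shows "degree (IxA n $$ (i, j)) \<le> 1"
proof -
  have "degree ([:0, 1:] * [:real_of_int (A_mat n $$ (i, j)):]) \<le> 1"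
    by (rule order.trans[OF degree_mult_le]) simp
  then show ?thesis
    unfolding IxA_entry[OF assms] by (intro order.trans[OF degree_diff_le]) auto
qed

lemma degree_cofactor_sum:
  assumes c: "c < 2 ^ n"
  shows "degree (\<Sum>j<2 ^ n. (-1) ^ (c + j) * det (mat_delete (IxA n) j c)) \<le> 2 ^ n - 1"
proof (rule degree_sum_le)
  fix j assume "j \<in> {..<(2::nat) ^ n}"
  have "degree (det (mat_delete (IxA n) j c)) \<le> 2 ^ n - 1"
  proof (rule degree_det_le[OF mat_delete_carrier[OF IxA_carrier]])
    fix i k :: nat assume ik: "i < 2 ^ n - 1" "k < 2 ^ n - 1"
    then have "mat_delete (IxA n) j c $$ (i, k) =
        IxA n $$ (if i < j then i else Suc i, if k < c then k else Suc k)"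
      using IxA_carrier[of n] unfolding mat_delete_def by simp
    moreover have "degree (IxA n $$ (if i < j then i else Suc i, if k < c then k else Suc k)) \<le> 1"
      by (rule degree_IxA_entry) (use ik in auto)
    ultimately show "degree (mat_delete (IxA n) j c $$ (i, k)) \<le> 1" by simp
  qed
  moreover have "degree ((-1) ^ (c + j) :: real poly) = 0"
    using degree_power_le[of "-1 :: real poly" "c + j"] by simp
  ultimately show "degree ((-1) ^ (c + j) * det (mat_delete (IxA n) j c)) \<le> 2 ^ n - 1"
    using degree_mult_le[of "(-1) ^ (c + j) :: real poly" "det (mat_delete (IxA n) j c)"] by simp
qed simp

section \<open>Coefficients of a polynomial over a power of \<open>1 - x\<close>\<close>

definition binomial_fps :: "nat \<Rightarrow> real fps" where
  "binomial_fps k = Abs_fps (\<lambda>m. real ((m + k) choose k))"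

lemma fps_nth_mult_one_minus_X:
  fixes f :: "'a :: comm_ring_1 fps"
  shows "fps_nth (f * (1 - fps_X)) m = fps_nth f m - (if m = 0 then 0 else fps_nth f (m - 1))"
proof -
  have "f * (1 - fps_X) = f - f * fps_X" by (simp add: algebra_simps)
  then show ?thesis by (simp add: fps_X_mult_right_nth)
qed

lemma binomial_fps_mult_power: "binomial_fps k * (1 - fps_X) ^ Suc k = 1"
proof (induction k)
  case 0
  show ?case by (rule fps_ext) (simp add: fps_nth_mult_one_minus_X binomial_fps_def)
next
  case (Suc k)
  have step: "binomial_fps (Suc k) * (1 - fps_X) = binomial_fps k"
    by (rule fps_ext) (auto simp: fps_nth_mult_one_minus_X binomial_fps_def gr0_conv_Suc)
  have "binomial_fps (Suc k) * (1 - fps_X) ^ Suc (Suc k) = (binomial_fps (Suc k) * (1 - fps_X)) * (1 - fps_X) ^ Suc k"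
    by (simp only: power_Suc mult.assoc)
  also have "\<dots> = 1" unfolding step by (rule Suc.IH)
  finally show ?case .
qed

fun binomial_poly :: "nat \<Rightarrow> real poly" where
  "binomial_poly 0 = 1"
| "binomial_poly (Suc k) = Polynomial.smult (1 / real (Suc k)) ([:real (Suc k), 1:] * binomial_poly k)"

lemma poly_binomial_poly: "poly (binomial_poly k) (real m) = real ((m + k) choose k)"
proof (induction k)
  case (Suc k)
  have "real (Suc k) * real (Suc (m + k) choose Suc k) = real (Suc (m + k)) * real (m + k choose k)"
    by (metis Suc_times_binomial of_nat_mult)
  then show ?case
    using Suc by (simp add: field_simps del: binomial_Suc_Suc)
qed simp

lemma degree_binomial_poly: "degree (binomial_poly k) \<le> k"
proof (induction k)
  case (Suc k)
  have "degree ([:real (Suc k), 1:] * binomial_poly k) \<le> Suc k"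
    using order.trans[OF degree_mult_le, of "[:real (Suc k), 1:]" "binomial_poly k"] Suc by simp
  then show ?case by (simp add: order.trans[OF degree_smult_le])
qed simp

lemma one_minus_X_power_nonzero: "(1 - fps_X :: real fps) ^ k \<noteq> 0"
proof -
  have "fps_nth ((1 - fps_X :: real fps) ^ k) 0 = 1" by (simp add: fps_nth_power_0)
  then show ?thesis by auto
qed

lemma fps_nth_eq_poly_if_const_over_power:
  assumes "F * (1 - fps_X) ^ Suc k = fps_const c"
  shows "fps_nth F m = poly (Polynomial.smult c (binomial_poly k)) (real m)"
proof -
  have "F * (1 - fps_X) ^ Suc k = (fps_const c * binomial_fps k) * (1 - fps_X) ^ Suc k"
    using assms binomial_fps_mult_power[of k] by (simp add: mult.assoc)
  then have "F = fps_const c * binomial_fps k" using one_minus_X_power_nonzero by simp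
  then show ?thesis by (simp add: binomial_fps_def poly_binomial_poly)
qed

text \<open>The induction peels off \<open>P = (x - 1) S + P(1)\<close>: the remainder contributes a multiple of
  \<open>binomial_fps\<close>, the quotient a power series with one factor \<open>1 - x\<close> less.\<close>

theorem fps_nth_eq_poly_if_poly_over_power:
  assumes "F * (1 - fps_X) ^ Suc k = fps_of_poly P" "degree P \<le> k"
  shows "\<exists>q. degree q \<le> k \<and> (\<forall>m. fps_nth F m = poly q (real m))"
  using assms
proof (induction k arbitrary: F P)
  case 0
  have "[:coeff P 0:] = P" using "0.prems"(2) by (intro degree_0_id) simp
  then have "F * (1 - fps_X) ^ Suc 0 = fps_const (coeff P 0)"
    using "0.prems"(1) fps_of_poly_const[of "coeff P 0"] by simp
  then have "fps_nth F m = poly [:coeff P 0:] (real m)" for m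
    using fps_nth_eq_poly_if_const_over_power[of F 0 "coeff P 0" m] by simp
  then show ?case by (intro exI[of _ "[:coeff P 0:]"]) simp
next
  case (Suc k)
  define S where "S = synthetic_div P 1"
  have P: "P = [:-1, 1:] * S + [:poly P 1:]"
    unfolding S_def using synthetic_div_correct'[of 1 P] by simp
  define G where "G = fps_of_poly (- S) * binomial_fps k"
  have G: "G * (1 - fps_X) ^ Suc k = fps_of_poly (- S)"
    unfolding G_def using binomial_fps_mult_power[of k] by (simp add: mult.assoc)
  have "degree (- S) \<le> k" unfolding S_def using Suc.prems(2) by (simp add: degree_synthetic_div)
  then obtain q where q: "degree q \<le> k" "\<forall>m. fps_nth G m = poly q (real m)"
    using Suc.IH[OF G] by blast
  have "fps_of_poly (- S) * (1 - fps_X) = fps_of_poly ([:-1, 1:] * S)"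
    by (simp add: fps_of_poly_mult fps_of_poly_linear' algebra_simps)
  then have "(F - G) * (1 - fps_X) ^ Suc (Suc k) = fps_of_poly P - fps_of_poly ([:-1, 1:] * S)"
    unfolding Suc.prems(1)[symmetric] G[symmetric] by (simp add: algebra_simps)
  also have "\<dots> = fps_const (poly P 1)"
  proof -
    have "P - [:-1, 1:] * S = [:poly P 1:]" using P by (metis add_diff_cancel_left')
    then show ?thesis unfolding fps_of_poly_diff[symmetric] fps_of_poly_const by simp
  qed
  finally have "fps_nth (F - G) m = poly (Polynomial.smult (poly P 1) (binomial_poly (Suc k))) (real m)" for m
    by (rule fps_nth_eq_poly_if_const_over_power)
  then have "fps_nth F m = poly (q + Polynomial.smult (poly P 1) (binomial_poly (Suc k))) (real m)" for m
    using q(2) by (simp del: binomial_poly.simps add: diff_eq_eq add.commute)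
  moreover have "degree (q + Polynomial.smult (poly P 1) (binomial_poly (Suc k))) \<le> Suc k"
    using q(1) degree_binomial_poly[of "Suc k"]
    by (intro degree_add_le) (auto intro: order.trans[OF degree_smult_le])
  ultimately show ?case by blast
qed

theorem corollary5p30:
  fixes n :: nat and a :: "nat \<Rightarrow> nat"
  assumes "n \<ge> 1"
  shows "Abs_fps (\<lambda>m. real (num_vertices n m a)) =
           fps_of_poly (\<Sum>j<2 ^ n. (-1) ^ (ind n (chi a) + j) * Q_poly n a j)
             div (1 - fps_X) ^ (2 ^ n)
       \<and> (\<exists>p :: real poly. degree p \<le> 2 ^ n - 1 \<and>
             (\<forall>m. real (num_vertices n m a) = poly p (real m)))"
proof -
  let ?c = "ind n (chi a)" and ?P = "\<Sum>j<2 ^ n. (-1) ^ (ind n (chi a) + j) * Q_poly n a j"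
  have c: "?c < 2 ^ n" by (rule ind_less[OF zero_one_chi])
  have coeff: "real (num_vertices n m a) = fps_nth (walk_gf n ?c) m" for m
    unfolding walk_gf_def num_vertices_eq_card_walks[OF assms] by simp
  then have gf: "Abs_fps (\<lambda>m. real (num_vertices n m a)) = walk_gf n ?c"
    by (intro fps_ext) simp
  have rational: "walk_gf n ?c * (1 - fps_X) ^ Suc (2 ^ n - 1) = fps_of_poly ?P"
    using walk_gf_cofactor_sum[OF c] unfolding Q_poly_def by (simp add: mult.commute)
  then have "fps_of_poly ?P div (1 - fps_X) ^ (2 ^ n) = walk_gf n ?c * (1 - fps_X) ^ (2 ^ n) div (1 - fps_X) ^ (2 ^ n)"
    by simp
  also have "\<dots> = walk_gf n ?c"
    by (rule nonzero_mult_div_cancel_right[OF one_minus_X_power_nonzero])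
  finally have quotient: "fps_of_poly ?P div (1 - fps_X) ^ (2 ^ n) = walk_gf n ?c" .
  obtain p where "degree p \<le> 2 ^ n - 1" "\<forall>m. fps_nth (walk_gf n ?c) m = poly p (real m)"
    using fps_nth_eq_poly_if_poly_over_power[OF rational] degree_cofactor_sum[OF c]
    unfolding Q_poly_def by blast
  then have "degree p \<le> 2 ^ n - 1" "\<forall>m. real (num_vertices n m a) = poly p (real m)"
    using coeff by simp_all
  then show ?thesis
    unfolding gf quotient by blast
qed

end
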